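(* Let $k\ge2$ be an integer, $s_0\in(0,1)$, $i_0\in(0,1)$, $\tau,\eta,\lambda>0$, $f(v):=s_0(1-e^{-\tau v})-\eta v$ and $\mathscr{R}_0:=s_0\tau/\eta$. Assume $\mathscr{R}_0>1$ and $0<\lambda<\lambda_c$, where $\lambda_c:=\frac{\eta(\mathscr{R}_0-1)}{k+1-2\sqrt{k}}$. Define $$c_*^k:=\min_{\gamma>0}\frac{\eta(\mathscr{R}_0-1)+\lambda\left(e^{\gamma}-(k+1)+ke^{-\gamma}\right)}{\gamma}>0.$$ Let $(\mathcal{I}_n^\infty)_{n\ge1}$ be the unique positive bounded solution of $0=f(\mathcal{I}_n)+\lambda(\mathcal{I}_{n-1}-(k+1)\mathcal{I}_n+k\mathcal{I}_{n+1})$ for $n\ge2$, $0=f(\mathcal{I}_1)+i_0+\lambda(k+1)(-\mathcal{I}_1+\mathcal{I}_2)$, and let $(\mathcal{I}_n(t))_{n\ge1}$ solve $$\begin{cases}\mathcal{I}_n'(t)=f(\mathcal{I}_n(t))+\lambda\left(\mathcal{I}_{n-1}(t)-(k+1)\mathcal{I}_n(t)+k\mathcal{I}_{n+1}(t)\right), & n\ge2,\\ \mathcal{I}_1'(t)=f(\mathcal{I}_1(t))+i_0+\lambda(k+1)\left(-\mathcal{I}_1(t)+\mathcal{I}_2(t)\right),\end{cases}\qquad \mathcal{I}_n(0)=0\ \forall n\ge1.$$ Then: (i) for every $c\in(0,c_*^k)$, $\lim_{t\to+\infty}\sup_{1\le n\le ct}|\mathcal{I}_n(t)-\mathcal{I}_n^\infty|=0$;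 (ii) for every $c>c_*^k$, $\lim_{t\to+\infty}\sup_{n\ge ct}|\mathcal{I}_n(t)|=0$.
   Context: The system describes the cumulative density of infected individuals in an SIR model on the homogeneous tree of degree $k$ with infection initially only at the root, $\mathcal{I}_n$ being the common value at vertices at distance $n-1$ from the root. *)

theory Defs
  imports "HOL-Analysis.Analysis"
begin

definition sir_f :: "real \<Rightarrow> real \<Rightarrow> real \<Rightarrow> real \<Rightarrow> real" where
  "sir_f s0 tau eta v = s0 * (1 - exp (- tau * v)) - eta * v"

definition R0 :: "real \<Rightarrow> real \<Rightarrow> real \<Rightarrow> real" where
  "R0 s0 tau eta = s0 * tau / eta"

definition lambda_c :: "nat \<Rightarrow> real \<Rightarrow> real \<Rightarrow> real \<Rightarrow> real" where
  "lambda_c k s0 tau eta = eta * (R0 s0 tau eta - 1) / (real k + 1 - 2 * sqrt (real k))"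

text \<open>Spreading speed c_*^k = min over gamma > 0 of the given expression
  (written as an infimum; the minimum is attained).\<close>
definition cstar :: "nat \<Rightarrow> real \<Rightarrow> real \<Rightarrow> real \<Rightarrow> real \<Rightarrow> real" where
  "cstar k s0 tau eta lam =
     (INF gamma\<in>{0<..}. (eta * (R0 s0 tau eta - 1)
        + lam * (exp gamma - (real k + 1) + real k * exp (- gamma))) / gamma)"

end

theory Submission
  imports Defs
begin

text \<open>
  Everything rests on comparison with sub- and supersolutions of the cooperative lattice
  system, taken in the sense of right Dini derivatives because the cut-off profiles used below
  are not differentiable.

  Part (ii): since \<open>f(v) \<le> (s\<^sub>0\<tau> - \<eta>) v\<close>, each exponential \<open>A e\<^sup>-\<^sup>\<gamma>\<^sup>(\<^sup>n\<^sup>-\<^sup>c\<^sup>t\<^sup>)\<close> whose speed \<open>c\<close>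
  solves the linear dispersion relation is a supersolution, and optimising \<open>\<gamma>\<close> reaches every
  speed above \<open>c\<^sub>*\<close>.

  Part (i): for \<open>c < c\<^sub>*\<close> the dispersion relation with a slightly reduced growth rate has a
  complex root \<open>\<gamma> + i\<beta>\<close> with \<open>0 < \<beta> < \<pi>\<close>, so the first arch of \<open>e\<^sup>-\<^sup>\<gamma>\<^sup>x sin (\<beta>x)\<close> is a
  subsolution travelling at speed \<open>c\<close>. Started below the region already infected near the
  source, it keeps \<open>I\<close> bounded below behind the front. Then \<open>\<theta>(t) I\<^sup>\<infinity>\<close> with a logistic
  \<open>\<theta>\<close>, corrected by a term that is negligible behind the front, is a subsolution, which
  squeezes \<open>I\<close> between it and \<open>I\<^sup>\<infinity>\<close>.
\<close>

section \<open>Right Dini derivatives and comparison on lattices\<close>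

definition right_dini_le :: "(real \<Rightarrow> real) \<Rightarrow> real \<Rightarrow> real \<Rightarrow> bool" where
  "right_dini_le g t D \<longleftrightarrow> (\<forall>r>D. \<forall>\<^sub>F s in at_right t. g s \<le> g t + r * (s - t))"

lemma right_dini_le_mono: "right_dini_le g t D \<Longrightarrow> D \<le> D' \<Longrightarrow> right_dini_le g t D'"
  unfolding right_dini_le_def by auto

lemma right_dini_le_add:
  assumes "right_dini_le g t D1" "right_dini_le h t D2"
  shows "right_dini_le (\<lambda>s. g s + h s) t (D1 + D2)"
  unfolding right_dini_le_def
proof (intro allI impI)
  fix r assume r: "r > D1 + D2"
  define e where "e = (r - D1 - D2) / 2"
  have e: "e > 0" using r unfolding e_def by simp
  have "\<forall>\<^sub>F s in at_right t. g s \<le> g t + (D1 + e) * (s - t)"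
    using assms(1) e unfolding right_dini_le_def by auto
  moreover have "\<forall>\<^sub>F s in at_right t. h s \<le> h t + (D2 + e) * (s - t)"
    using assms(2) e unfolding right_dini_le_def by auto
  ultimately show "\<forall>\<^sub>F s in at_right t. g s + h s \<le> g t + h t + r * (s - t)"
  proof eventually_elim
    case (elim s)
    have "r * (s - t) = (D1 + e) * (s - t) + (D2 + e) * (s - t)"
      unfolding e_def by (simp add: algebra_simps)
    thus ?case using elim by linarith
  qed
qed

lemma has_real_derivative_right_dini_le:
  assumes "(g has_real_derivative D) (at_right t)"
  shows "right_dini_le g t D"
  unfolding right_dini_le_def
proof (intro allI impI)
  fix r assume "r > D"
  moreover have "((\<lambda>s. (g s - g t) / (s - t)) \<longlongrightarrow> D) (at_right t)"
    using assms unfolding has_field_derivative_iff .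
  ultimately have "\<forall>\<^sub>F s in at_right t. (g s - g t) / (s - t) < r"
    using order_tendstoD(2) by blast
  thus "\<forall>\<^sub>F s in at_right t. g s \<le> g t + r * (s - t)"
    using eventually_at_right_less[of t]
    by eventually_elim (simp add: pos_divide_less_eq algebra_simps)
qed

lemma right_dini_le_const: "0 \<le> D \<Longrightarrow> right_dini_le (\<lambda>s. c) t D"
  unfolding right_dini_le_def
  by (auto intro: eventually_mono[OF eventually_at_right_less])

lemma right_dini_le_max:
  assumes "right_dini_le g t D1" "right_dini_le h t D2"
    and "(g \<longlongrightarrow> g t) (at_right t)" "(h \<longlongrightarrow> h t) (at_right t)"
    and "g t \<ge> h t \<Longrightarrow> D1 \<le> D" "h t \<ge> g t \<Longrightarrow> D2 \<le> D"
  shows "right_dini_le (\<lambda>s. max (g s) (h s)) t D"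
proof (cases "g t > h t \<or> h t > g t")
  case True
  then consider "g t > h t" | "h t > g t" by blast
  then show ?thesis
  proof cases
    case 1
    have "\<forall>\<^sub>F s in at_right t. g s - h s > 0"
      using order_tendstoD(1)[OF tendsto_diff[OF assms(3,4)], of 0] 1 by simp
    moreover have "right_dini_le g t D" using assms(1,5) 1 right_dini_le_mono by auto
    ultimately show ?thesis unfolding right_dini_le_def
      using 1 by (auto elim: eventually_elim2)
  next
    case 2
    have "\<forall>\<^sub>F s in at_right t. h s - g s > 0"
      using order_tendstoD(1)[OF tendsto_diff[OF assms(4,3)], of 0] 2 by simp
    moreover have "right_dini_le h t D" using assms(2,6) 2 right_dini_le_mono by auto
    ultimately show ?thesis unfolding right_dini_le_def
      using 2 by (auto elim: eventually_elim2)
  qed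
next
  case False
  hence eq: "g t = h t" by simp
  have "right_dini_le g t D" "right_dini_le h t D"
    using assms(1,2,5,6) eq right_dini_le_mono by auto
  thus ?thesis unfolding right_dini_le_def using eq by (auto simp: eventually_conj_iff)
qed

lemma right_dini_le_shift:
  assumes "right_dini_le g (t - c) D"
  shows "right_dini_le (\<lambda>s. g (s - c)) t D"
  unfolding right_dini_le_def
proof (intro allI impI)
  fix r assume "r > D"
  with assms obtain b where b: "b > t - c"
    "\<And>y. t - c < y \<Longrightarrow> y < b \<Longrightarrow> g y \<le> g (t - c) + r * (y - (t - c))"
    unfolding right_dini_le_def eventually_at_right_field by blast
  show "\<forall>\<^sub>F s in at_right t. g (s - c) \<le> g (t - c) + r * (s - t)"
    unfolding eventually_at_right_field
  proof (intro exI[of _ "b + c"] conjI allI impI)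
    show "t < b + c" using b(1) by simp
    fix y assume "t < y" "y < b + c"
    thus "g (y - c) \<le> g (t - c) + r * (y - t)" using b(2)[of "y - c"] by simp
  qed
qed

lemma right_dini_le_below_differentiable:
  assumes "right_dini_le g t D" "(h has_real_derivative E) (at t)" "D < E" "g t \<le> h t"
  shows "\<forall>\<^sub>F s in at_right t. g s \<le> h s"
proof -
  have "(h has_real_derivative E) (at_right t)"
    using assms(2) by (rule has_field_derivative_at_within)
  hence "right_dini_le (\<lambda>s. - h s) t (- E)"
    by (intro has_real_derivative_right_dini_le derivative_intros)
  hence "right_dini_le (\<lambda>s. g s - h s) t ((D - E) / 2)"
    using right_dini_le_add[OF assms(1)] right_dini_le_mono assms(3) by fastforce
  moreover have "(D - E) / 2 < (0::real)" using assms(3) by simp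
  ultimately have "\<forall>\<^sub>F s in at_right t. g s - h s \<le> g t - h t + 0 * (s - t)"
    unfolding right_dini_le_def by blast
  thus ?thesis by (rule eventually_mono) (use assms(4) in simp)
qed

lemma real_interval_induct [consumes 2, case_names base left_limit right_step]:
  fixes a b t :: real
  assumes "a \<le> t" "t \<le> b"
    and base: "P a"
    and left_limit: "\<And>t. a < t \<Longrightarrow> t \<le> b \<Longrightarrow> (\<And>s. a \<le> s \<Longrightarrow> s < t \<Longrightarrow> P s) \<Longrightarrow> P t"
    and right_step: "\<And>t. a \<le> t \<Longrightarrow> t < b \<Longrightarrow> (\<And>s. a \<le> s \<Longrightarrow> s \<le> t \<Longrightarrow> P s)
                       \<Longrightarrow> \<forall>\<^sub>F s in at_right t. P s"
  shows "P t"
proof -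
  define G where "G = {t\<in>{a..b}. \<forall>s\<in>{a..t}. P s}"
  have aG: "a \<in> G" unfolding G_def using assms(1,2) base by auto
  have bddG: "bdd_above G" unfolding G_def bdd_above_def by auto
  define t0 where "t0 = Sup G"
  have t0: "a \<le> t0" "t0 \<le> b"
    unfolding t0_def using aG bddG by (rule cSup_upper, intro cSup_least) (auto simp: G_def)
  have below: "P s" if "a \<le> s" "s < t0" for s
  proof -
    obtain t where "t \<in> G" "s < t"
      using \<open>s < t0\<close> less_cSup_iff[OF _ bddG] aG unfolding t0_def by blast
    thus ?thesis using that unfolding G_def by auto
  qed
  have upto_t0: "P s" if "a \<le> s" "s \<le> t0" for s
  proof (cases "s < t0")
    case False
    hence "s = t0" using that by simp
    thus ?thesis using below left_limit[of t0] t0 base by (cases "a < t0") auto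
  qed (use below that in auto)
  have "t0 = b"
  proof (rule ccontr)
    assume "t0 \<noteq> b"
    hence "t0 < b" using t0 by simp
    have "\<forall>\<^sub>F s in at_right t0. s < b"
      unfolding eventually_at_right_field using \<open>t0 < b\<close> by blast
    hence "\<forall>\<^sub>F s in at_right t0. P s \<and> s < b"
      using right_step[OF t0(1) \<open>t0 < b\<close> upto_t0] by (simp add: eventually_conj_iff)
    then obtain c where c: "c > t0" "\<And>s. t0 < s \<Longrightarrow> s < c \<Longrightarrow> P s \<and> s < b"
      unfolding eventually_at_right_field by blast
    define s1 where "s1 = (t0 + c) / 2"
    have s1: "t0 < s1" "s1 < c" using c(1) unfolding s1_def by auto
    have "P s" if "a \<le> s" "s \<le> s1" for s
      using upto_t0[of s] c(2)[of s] that s1 by (cases "s \<le> t0") auto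
    hence "s1 \<in> G" unfolding G_def using c(2)[OF s1] s1 t0 by auto
    hence "s1 \<le> t0" unfolding t0_def using bddG by (rule cSup_upper)
    thus False using s1 by simp
  qed
  thus ?thesis using upto_t0 assms(1,2) by simp
qed

lemma continuous_on_nonpos_from_left:
  fixes g :: "real \<Rightarrow> real"
  assumes "continuous_on {a..b} g" "a < t" "t \<le> b" "\<And>s. a \<le> s \<Longrightarrow> s < t \<Longrightarrow> g s \<le> 0"
  shows "g t \<le> 0"
proof -
  have "(g \<longlongrightarrow> g t) (at t within {a..b})"
    using assms(1-3) by (simp add: continuous_on_def)
  hence "(g \<longlongrightarrow> g t) (at t within {a..<t})"
    by (rule tendsto_within_subset) (use assms(3) in auto)
  moreover have "at t within {a..<t} \<noteq> bot"
    using assms(2) by (simp add: trivial_limit_within islimpt_Ico)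
  moreover have "\<forall>\<^sub>F s in at t within {a..<t}. g s \<le> 0"
    using assms(4) by (auto simp: eventually_at_filter)
  ultimately show ?thesis
    using tendsto_upperbound by blast
qed

lemma continuous_on_eventually_neg_at_right:
  fixes g :: "real \<Rightarrow> real"
  assumes "continuous_on {a..b} g" "a \<le> t" "t < b" "g t < 0"
  shows "\<forall>\<^sub>F s in at_right t. g s < 0"
proof -
  have "(g \<longlongrightarrow> g t) (at t within {a..b})"
    using assms(1-3) by (simp add: continuous_on_def)
  hence "(g \<longlongrightarrow> g t) (at t within {t<..<b})"
    by (rule tendsto_within_subset) (use assms(2) in auto)
  hence "\<forall>\<^sub>F s in at t within {t<..<b}. g s < 0"
    using assms(4) order_tendstoD(2) by blast
  moreover have "\<forall>\<^sub>F s in at_right t. s < b"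
    unfolding eventually_at_right_field using assms(3) by blast
  ultimately show ?thesis
    unfolding eventually_at_filter by eventually_elim auto
qed

text \<open>The penalty \<open>\<epsilon> e\<^sup>L\<^sup>(\<^sup>t\<^sup>-\<^sup>a\<^sup>) n\<close> grows faster than the Dini bound allows \<open>d n\<close> to grow
  wherever the two touch, so \<open>d n\<close> stays below it for a while.\<close>

lemma lattice_comparison_touching:
  fixes d :: "nat \<Rightarrow> real \<Rightarrow> real" and p q :: "nat \<Rightarrow> real"
  assumes cont: "continuous_on {a..b} (d n)"
    and p: "0 \<le> p n" "p n \<le> P" and q: "0 \<le> q n" "q n \<le> Q"
    and dini: "d n t0 > 0 \<Longrightarrow>
       right_dini_le (d n) t0 (K * d n t0 + (if n \<ge> 2 then p n * d (n-1) t0 else 0) + q n * d (n+1) t0)"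
    and L: "L > \<bar>K\<bar> + P + 2 * Q" and eps: "\<epsilon> > 0" and n: "n \<ge> 1" and t0: "a \<le> t0" "t0 < b"
    and below: "\<And>j. j \<ge> 1 \<Longrightarrow> d j t0 \<le> \<epsilon> * exp (L * (t0 - a)) * j"
  shows "\<forall>\<^sub>F s in at_right t0. d n s \<le> \<epsilon> * exp (L * (s - a)) * n"
proof -
  define w where "w j t = \<epsilon> * exp (L * (t - a)) * j" for j :: nat and t
  have w_pos: "w n t > 0" for t unfolding w_def using eps n by simp
  have w_nonneg: "w j t \<ge> 0" for j t unfolding w_def using eps by simp
  show ?thesis
  proof (cases "d n t0 < w n t0")
    case True
    have "continuous_on {a..b} (\<lambda>s. d n s - w n s)"
      unfolding w_def by (intro continuous_intros cont)
    from continuous_on_eventually_neg_at_right[OF this t0] True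
    show ?thesis by (auto simp: w_def elim: eventually_mono)
  next
    case False
    with below[OF n] have dn: "d n t0 = w n t0" unfolding w_def by simp
    define D where "D = K * d n t0 + (if n \<ge> 2 then p n * d (n-1) t0 else 0) + q n * d (n+1) t0"
    have "(if n \<ge> 2 then p n * d (n-1) t0 else 0) \<le> P * w n t0"
    proof (cases "n \<ge> 2")
      case True
      have "d (n-1) t0 \<le> w (n-1) t0" using below[of "n - 1"] True unfolding w_def by simp
      also have "\<dots> \<le> w n t0" unfolding w_def using eps by (intro mult_left_mono) auto
      finally have "p n * d (n-1) t0 \<le> p n * w n t0" using p(1) by (rule mult_left_mono)
      also have "\<dots> \<le> P * w n t0" using p(2) w_nonneg by (rule mult_right_mono)
      finally show ?thesis using True by simp
    qed (use p w_nonneg in simp)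
    moreover have "q n * d (n+1) t0 \<le> Q * (2 * w n t0)"
    proof -
      have "d (n+1) t0 \<le> w (n+1) t0" using below[of "n + 1"] unfolding w_def by simp
      also have "\<dots> \<le> 2 * w n t0" unfolding w_def using eps n by simp
      finally have "q n * d (n+1) t0 \<le> q n * (2 * w n t0)" using q(1) by (rule mult_left_mono)
      also have "\<dots> \<le> Q * (2 * w n t0)" using q(2) w_nonneg by (intro mult_right_mono) auto
      finally show ?thesis .
    qed
    moreover have "K * d n t0 \<le> \<bar>K\<bar> * w n t0"
      unfolding dn using w_nonneg by (simp add: mult_right_mono)
    ultimately have "D \<le> (\<bar>K\<bar> + P + 2 * Q) * w n t0" unfolding D_def by (simp add: algebra_simps)
    also have "\<dots> < L * w n t0" using L w_pos by simp
    finally have "D < L * w n t0" .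
    moreover have "(w n has_real_derivative L * w n t0) (at t0)"
      unfolding w_def by (auto intro!: derivative_eq_intros)
    moreover have "right_dini_le (d n) t0 D" unfolding D_def using dini dn w_pos by simp
    ultimately have "\<forall>\<^sub>F s in at_right t0. d n s \<le> w n s"
      using right_dini_le_below_differentiable dn by simp
    thus ?thesis unfolding w_def .
  qed
qed

lemma lattice_comparison_penalized:
  fixes d :: "nat \<Rightarrow> real \<Rightarrow> real" and p q :: "nat \<Rightarrow> real"
  assumes cont: "\<And>n. n \<ge> 1 \<Longrightarrow> continuous_on {a..b} (d n)"
    and bdd: "\<And>n t. n \<ge> 1 \<Longrightarrow> t \<in> {a..b} \<Longrightarrow> d n t \<le> B"
    and init: "\<And>n. n \<ge> 1 \<Longrightarrow> d n a \<le> 0"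
    and p: "\<And>n. 0 \<le> p n" "\<And>n. p n \<le> P" and q: "\<And>n. 0 \<le> q n" "\<And>n. q n \<le> Q"
    and dini: "\<And>n t. n \<ge> 1 \<Longrightarrow> a \<le> t \<Longrightarrow> t < b \<Longrightarrow> d n t > 0 \<Longrightarrow>
       right_dini_le (d n) t (K * d n t + (if n \<ge> 2 then p n * d (n-1) t else 0) + q n * d (n+1) t)"
    and L: "L > \<bar>K\<bar> + P + 2 * Q" and eps: "\<epsilon> > 0"
    and t: "a \<le> t" "t \<le> b"
  shows "\<forall>n\<ge>1. d n t \<le> \<epsilon> * exp (L * (t - a)) * n"
  using t
proof (induction t rule: real_interval_induct)
  case base
  show ?case using init eps by (simp add: order_trans[OF _ mult_nonneg_nonneg])
next
  case (left_limit t)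
  show ?case
  proof (intro allI impI)
    fix n :: nat assume n: "n \<ge> 1"
    have "continuous_on {a..b} (\<lambda>s. d n s - \<epsilon> * exp (L * (s - a)) * n)"
      by (intro continuous_intros cont n)
    from continuous_on_nonpos_from_left[OF this left_limit(1,2)] left_limit(3) n
    show "d n t \<le> \<epsilon> * exp (L * (t - a)) * n" by simp
  qed
next
  case (right_step t0)
  have "P \<ge> 0" "Q \<ge> 0" using p q order_trans by blast+
  hence exp_ge_1: "exp (L * (s - a)) \<ge> 1" if "a \<le> s" for s using that L by simp
  obtain N :: nat where N: "B < \<epsilon> * N"
    using reals_Archimedean3[OF eps] by (metis mult.commute)
  have far: "d n s \<le> \<epsilon> * exp (L * (s - a)) * n" if "n \<ge> N" "n \<ge> 1" "s \<in> {a..b}" for n s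
  proof -
    have "\<epsilon> * N \<le> \<epsilon> * n * 1" using eps that(1) by simp
    also have "\<dots> \<le> \<epsilon> * n * exp (L * (s - a))"
      using eps exp_ge_1 that(3) by (intro mult_left_mono) auto
    finally show ?thesis using bdd[OF that(2,3)] N by (simp add: mult_ac)
  qed
  have below: "d j t0 \<le> \<epsilon> * exp (L * (t0 - a)) * j" if "j \<ge> 1" for j
    using right_step(3)[of t0] right_step(1) that by simp
  have "\<forall>\<^sub>F s in at_right t0. d n s \<le> \<epsilon> * exp (L * (s - a)) * n" if "n \<ge> 1" for n
    using lattice_comparison_touching[where d=d and n=n and p=p and q=q, OF cont[OF that] p(1,2)[of n] q(1,2)[of n]
        dini[OF that right_step(1,2)] L eps that right_step(1,2) below] .
  hence "\<forall>\<^sub>F s in at_right t0. \<forall>n\<in>{1..<N}. d n s \<le> \<epsilon> * exp (L * (s - a)) * n"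
    by (intro eventually_ball_finite) auto
  moreover have "\<forall>\<^sub>F s in at_right t0. s < b"
    unfolding eventually_at_right_field using right_step(2) by blast
  ultimately show ?case using eventually_at_right_less[of t0]
  proof eventually_elim
    case (elim s)
    hence "s \<in> {a..b}" using right_step(1) by simp
    thus ?case using elim far by (metis atLeastLessThan_iff not_le)
  qed
qed

lemma lattice_comparison:
  fixes d :: "nat \<Rightarrow> real \<Rightarrow> real" and p q :: "nat \<Rightarrow> real"
  assumes cont: "\<And>n. n \<ge> 1 \<Longrightarrow> continuous_on {a..b} (d n)"
    and bdd: "\<And>n t. n \<ge> 1 \<Longrightarrow> t \<in> {a..b} \<Longrightarrow> d n t \<le> B"
    and init: "\<And>n. n \<ge> 1 \<Longrightarrow> d n a \<le> 0"
    and p: "\<And>n. 0 \<le> p n" "\<And>n. p n \<le> P" and q: "\<And>n. 0 \<le> q n" "\<And>n. q n \<le> Q"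
    and dini: "\<And>n t. n \<ge> 1 \<Longrightarrow> a \<le> t \<Longrightarrow> t < b \<Longrightarrow> d n t > 0 \<Longrightarrow>
       right_dini_le (d n) t (K * d n t + (if n \<ge> 2 then p n * d (n-1) t else 0) + q n * d (n+1) t)"
    and "n \<ge> 1" "t \<in> {a..b}"
  shows "d n t \<le> 0"
proof (rule field_le_epsilon)
  fix e :: real assume e: "e > 0"
  define C where "C = exp ((\<bar>K\<bar> + P + 2 * Q + 1) * (t - a)) * n"
  have C: "C > 0" unfolding C_def using assms(9) by simp
  have "d n t \<le> (e / C) * exp ((\<bar>K\<bar> + P + 2 * Q + 1) * (t - a)) * n"
    using lattice_comparison_penalized[OF assms(1-8), of "\<bar>K\<bar> + P + 2 * Q + 1" "e / C" t]
      e C assms(9,10) by auto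
  also have "\<dots> = e" using C assms(9) unfolding C_def by simp
  finally show "d n t \<le> 0 + e" by simp
qed

lemma power_div_fact_le_exp:
  fixes x :: real assumes "x \<ge> 0"
  shows "x ^ n / fact n \<le> exp x"
proof -
  have s: "(\<lambda>j. x ^ j / fact j) sums exp x"
    using exp_converges[of x] by (simp add: divide_inverse mult.commute scaleR_conv_of_real)
  have "sum (\<lambda>j. x ^ j / fact j) {n} \<le> suminf (\<lambda>j. x ^ j / fact j)"
    by (rule sum_le_suminf) (use s assms in \<open>auto simp: sums_summable\<close>)
  thus ?thesis using sums_unique[OF s] by simp
qed

lemma exp_ge_quadratic: "(x::real) \<ge> 0 \<Longrightarrow> exp x \<ge> 1 + x + x\<^sup>2 / 4"
proof -
  assume x: "x \<ge> 0"
  have "exp x = exp (x/2) * exp (x/2)" by (simp add: exp_add[symmetric])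
  also have "\<dots> \<ge> (1 + x/2) * (1 + x/2)"
    using exp_ge_add_one_self[of "x/2"] x by (intro mult_mono) auto
  finally show ?thesis by (simp add: algebra_simps power2_eq_square)
qed

lemma exp_add_mult_exp_neg_ge:
  fixes c :: real assumes "c \<ge> 0"
  shows "exp x + c * exp (- x) \<ge> 2 * sqrt c"
proof -
  have "0 \<le> (exp (x/2) - sqrt c * exp (- x/2))\<^sup>2" by simp
  also have "\<dots> = exp x + c * exp (- x) - 2 * sqrt c"
    using assms by (simp add: power2_eq_square algebra_simps flip: exp_add)
  finally show ?thesis by simp
qed

lemma sin_over_self_tendsto_1: "((\<lambda>x::real. sin x / x) \<longlongrightarrow> 1) (at_right 0)"
proof -
  have "((\<lambda>x. (sin x - sin 0) / (x - 0)) \<longlongrightarrow> cos 0) (at (0::real))"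
    using DERIV_sin[of 0] unfolding has_field_derivative_iff by simp
  hence "((\<lambda>x::real. sin x / x) \<longlongrightarrow> 1) (at 0)" by simp
  thus ?thesis by (rule filterlim_mono) (auto simp: at_le)
qed

definition damped_sine :: "real \<Rightarrow> real \<Rightarrow> real \<Rightarrow> real" where
  "damped_sine g b x = exp (- g * x) * sin (b * x)"

definition damped_sine' :: "real \<Rightarrow> real \<Rightarrow> real \<Rightarrow> real" where
  "damped_sine' g b x = exp (- g * x) * (- g * sin (b * x) + b * cos (b * x))"

definition sine_bump :: "real \<Rightarrow> real \<Rightarrow> real \<Rightarrow> real" where
  "sine_bump g b x = damped_sine g b (max 0 (min (pi / b) x))"

lemma damped_sine_has_derivative: "(damped_sine g b has_real_derivative damped_sine' g b x) (at x)"
  unfolding damped_sine_def damped_sine'_def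
  by (auto intro!: derivative_eq_intros simp: algebra_simps)

lemma continuous_on_sine_bump: "continuous_on A (sine_bump g b)"
  unfolding sine_bump_def damped_sine_def by (intro continuous_intros)

lemma sine_bump_eq_damped_sine: "0 \<le> x \<Longrightarrow> x \<le> pi / b \<Longrightarrow> sine_bump g b x = damped_sine g b x"
  unfolding sine_bump_def by (simp add: max_def min_def)

lemma sine_bump_bounds:
  assumes g: "g \<ge> 0" and b: "0 < b"
  shows "0 \<le> sine_bump g b x" "sine_bump g b x \<le> 1"
proof -
  define y where "y = max 0 (min (pi / b) x)"
  have y: "0 \<le> y" "y \<le> pi / b" unfolding y_def using b by auto
  have "0 \<le> b * y" "b * y \<le> pi" using y b by (auto simp: field_simps)
  hence sin: "0 \<le> sin (b * y)" by (intro sin_ge_zero)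
  thus "0 \<le> sine_bump g b x" unfolding sine_bump_def y_def[symmetric] damped_sine_def by simp
  have "exp (- g * y) \<le> 1" using g y by (simp add: mult_nonneg_nonneg)
  thus "sine_bump g b x \<le> 1" unfolding sine_bump_def y_def[symmetric] damped_sine_def
    using sin by (simp add: mult_le_one)
qed

lemma sine_bump_pos_imp:
  assumes b: "0 < b" and pos: "sine_bump g b x > 0"
  shows "0 < x" "x < pi / b"
proof -
  have "max 0 (min (pi / b) x) \<noteq> 0" "max 0 (min (pi / b) x) \<noteq> pi / b"
    using pos b unfolding sine_bump_def damped_sine_def by auto
  thus "0 < x" "x < pi / b" using b by (auto simp: max_def min_def split: if_splits)
qed

lemma sine_bump_ge_damped_sine_neighbours:
  assumes b: "0 < b" "b < pi" and x: "0 < x" "x < pi / b"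
  shows "sine_bump g b (x - 1) \<ge> damped_sine g b (x - 1)"
    and "sine_bump g b (x + 1) \<ge> damped_sine g b (x + 1)"
proof -
  show "sine_bump g b (x - 1) \<ge> damped_sine g b (x - 1)"
  proof (cases "x - 1 \<ge> 0")
    case False
    have "- pi < b * (x - 1)"
      using mult_strict_left_mono[of "-1" "x - 1" b] b x by simp
    moreover have "b * (x - 1) < 0" using False b by (simp add: mult_pos_neg)
    ultimately have "sin (- (b * (x - 1))) > 0" by (intro sin_gt_zero) auto
    hence "damped_sine g b (x - 1) \<le> 0" unfolding damped_sine_def by (simp add: mult_pos_neg less_imp_le)
    moreover have "sine_bump g b (x - 1) = 0"
      using False b unfolding sine_bump_def damped_sine_def by (simp add: max_def min_def)
    ultimately show ?thesis by simp
  qed (use sine_bump_eq_damped_sine x in simp)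
  show "sine_bump g b (x + 1) \<ge> damped_sine g b (x + 1)"
  proof (cases "x + 1 \<le> pi / b")
    case False
    have "b * (x + 1) < b * (pi / b + 1)" using b x by (intro mult_strict_left_mono) auto
    also have "\<dots> = pi + b" using b by (simp add: field_simps)
    finally have "b * (x + 1) < 2 * pi" using b by simp
    moreover have "pi \<le> b * (x + 1)" using False b by (simp add: field_simps)
    ultimately have "sin (b * (x + 1)) \<le> 0" by (intro sin_le_zero) auto
    hence "damped_sine g b (x + 1) \<le> 0" unfolding damped_sine_def by (simp add: mult_nonneg_nonpos)
    moreover have "sine_bump g b (x + 1) = 0"
      using False b unfolding sine_bump_def damped_sine_def by (simp add: max_def min_def)
    ultimately show ?thesis by simp
  qed (use sine_bump_eq_damped_sine x in simp)
qed

definition logistic :: "real \<Rightarrow> real \<Rightarrow> real \<Rightarrow> real" where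
  "logistic th0 kap u = th0 / (th0 + (1 - th0) * exp (- kap * u))"

lemma logistic_bounds:
  assumes th0: "0 < th0" "th0 \<le> 1"
  shows "0 < logistic th0 kap u" "logistic th0 kap u \<le> 1" "logistic th0 kap 0 = th0"
    "1 - logistic th0 kap u \<le> exp (- kap * u) / th0"
proof -
  have e: "(1 - th0) * exp (- kap * u) \<ge> 0" using th0 by simp
  hence den: "th0 + (1 - th0) * exp (- kap * u) > 0" using th0 by linarith
  show "0 < logistic th0 kap u" unfolding logistic_def using den th0 by simp
  show "logistic th0 kap u \<le> 1" unfolding logistic_def using den th0 e by simp
  show "logistic th0 kap 0 = th0" unfolding logistic_def by simp
  have "1 - logistic th0 kap u = (1 - th0) * exp (- kap * u) / (th0 + (1 - th0) * exp (- kap * u))"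
    unfolding logistic_def using den by (simp add: field_simps)
  also have "\<dots> \<le> (1 - th0) * exp (- kap * u) / th0"
    using den th0 e by (intro divide_left_mono) auto
  also have "\<dots> \<le> exp (- kap * u) / th0"
    using th0 by (intro divide_right_mono) (auto simp: mult_left_le_one_le)
  finally show "1 - logistic th0 kap u \<le> exp (- kap * u) / th0" .
qed

lemma logistic_has_derivative:
  assumes th0: "0 < th0" "th0 \<le> 1"
  shows "(logistic th0 kap has_real_derivative
           kap * logistic th0 kap u * (1 - logistic th0 kap u)) (at u)"
proof -
  define D where "D = th0 + (1 - th0) * exp (- kap * u)"
  have D: "D > 0" unfolding D_def using th0 by (simp add: add_pos_nonneg)
  have "(logistic th0 kap has_real_derivative
          - (th0 * ((1 - th0) * (exp (- kap * u) * (- kap)))) / (D * D)) (at u)"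
    unfolding logistic_def D_def using D[unfolded D_def]
    by (auto intro!: derivative_eq_intros simp: power2_eq_square)
  moreover have "- (th0 * ((1 - th0) * (exp (- kap * u) * (- kap)))) / (D * D)
       = kap * logistic th0 kap u * (1 - logistic th0 kap u)"
    unfolding logistic_def D_def[symmetric] using D by (simp add: field_simps D_def)
  ultimately show ?thesis by simp
qed

lemma logistic_close_to_1:
  assumes th0: "0 < th0" "th0 \<le> 1" and kap: "kap > 0" and e: "e > 0"
  obtains u where "u \<ge> 0" "1 - logistic th0 kap u \<le> e"
proof
  define u where "u = max 0 (ln (1 / (th0 * e)) / kap)"
  show "u \<ge> 0" unfolding u_def by simp
  have "ln (1 / (th0 * e)) / kap \<le> u" unfolding u_def by simp
  hence "ln (1 / (th0 * e)) \<le> kap * u" using kap by (simp add: pos_divide_le_eq mult.commute)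
  hence "exp (- kap * u) \<le> exp (- ln (1 / (th0 * e)))" by simp
  also have "\<dots> = th0 * e" using th0 e by (simp add: exp_minus)
  finally have "exp (- kap * u) / th0 \<le> e" using th0 by (simp add: divide_le_eq mult.commute)
  thus "1 - logistic th0 kap u \<le> e" using logistic_bounds(4)[OF th0, of kap u] by linarith
qed

section \<open>The SIR lattice system\<close>

locale sir_lattice =
  fixes k :: nat and s0 tau eta lam i0 :: real
  assumes k_ge_2: "k \<ge> 2" and s0_pos: "s0 > 0" and tau_pos: "tau > 0" and eta_pos: "eta > 0"
    and lam_pos: "lam > 0" and i0_pos: "i0 > 0"
    and lam_subcritical: "lam * (real k + 1 - 2 * sqrt (real k)) < s0 * tau - eta"
begin

abbreviation f where "f \<equiv> sir_f s0 tau eta"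

abbreviation growth_rate where "growth_rate \<equiv> s0 * tau - eta"

definition rhs :: "(nat \<Rightarrow> real) \<Rightarrow> nat \<Rightarrow> real" where
  "rhs x n = (if n = 1 then f (x 1) + i0 + lam * (real k + 1) * (x 2 - x 1)
              else f (x n) + lam * (x (n - 1) - (real k + 1) * x n + real k * x (n + 1)))"

lemma sir_f_zero [simp]: "f 0 = 0"
  by (simp add: sir_f_def)

lemma sir_f_diff_le:
  assumes "y \<le> x"
  shows "f x - f y \<le> s0 * tau * exp (- tau * y) * (x - y)"
proof -
  have "exp (- tau * x) = exp (- tau * y) * exp (- (tau * (x - y)))"
    by (simp add: algebra_simps flip: exp_add)
  also have "\<dots> \<ge> exp (- tau * y) * (1 - tau * (x - y))"
    using exp_ge_add_one_self[of "- (tau * (x - y))"] by (intro mult_left_mono) auto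
  finally have "exp (- tau * y) - exp (- tau * x) \<le> tau * exp (- tau * y) * (x - y)"
    by (simp add: algebra_simps)
  hence "s0 * (exp (- tau * y) - exp (- tau * x)) \<le> s0 * (tau * exp (- tau * y) * (x - y))"
    using s0_pos by (intro mult_left_mono) auto
  moreover have "eta * (x - y) \<ge> 0" using eta_pos assms by simp
  ultimately show ?thesis unfolding sir_f_def by (simp add: algebra_simps)
qed

lemma sir_f_diff_le_nonneg:
  assumes "y \<le> x" "0 \<le> y"
  shows "f x - f y \<le> s0 * tau * (x - y)"
proof -
  have "s0 * tau * exp (- tau * y) * (x - y) \<le> s0 * tau * 1 * (x - y)"
    using assms s0_pos tau_pos by (intro mult_right_mono mult_left_mono) auto
  thus ?thesis using sir_f_diff_le[OF assms(1)] by simp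
qed

lemma sir_f_le_linear: "f x \<le> growth_rate * x"
proof -
  have "1 - exp (- tau * x) \<le> tau * x" using exp_ge_add_one_self[of "- tau * x"] by simp
  hence "s0 * (1 - exp (- tau * x)) \<le> s0 * (tau * x)" using s0_pos by (intro mult_left_mono) auto
  thus ?thesis unfolding sir_f_def by (simp add: algebra_simps)
qed

lemma sir_f_ge_neg: "u \<ge> 0 \<Longrightarrow> f u \<ge> - eta * u"
  unfolding sir_f_def using s0_pos tau_pos by simp

lemma sir_f_ge_quadratic:
  assumes "0 \<le> u"
  shows "f u \<ge> growth_rate * u - s0 * tau\<^sup>2 * u\<^sup>2"
proof -
  define x where "x = tau * u"
  have x: "x \<ge> 0" using assms tau_pos unfolding x_def by simp
  have "exp (- x) \<le> 1 / (1 + x)"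
    using exp_ge_add_one_self[of x] x by (simp add: exp_minus field_simps)
  moreover have "1 - 1 / (1 + x) \<ge> x - x\<^sup>2"
    using x by (simp add: field_simps power2_eq_square)
  ultimately have "1 - exp (- x) \<ge> x - x\<^sup>2" by simp
  hence "s0 * (1 - exp (- x)) \<ge> s0 * (x - x\<^sup>2)" using s0_pos by (intro mult_left_mono) auto
  thus ?thesis unfolding sir_f_def x_def by (simp add: algebra_simps power2_eq_square)
qed

text \<open>Convexity of \<open>exp\<close> through the midpoint \<open>v/2\<close>; this gap drives the logistic relaxation
  towards \<open>I\<^sup>\<infinity>\<close>.\<close>

lemma sir_f_concavity_gap:
  assumes v: "0 < v" and th: "0 \<le> th" "th \<le> 1"
  shows "f (th * v) - th * f v \<ge> s0 * (1 - exp (- tau * v / 2))\<^sup>2 * (th * (1 - th))"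
proof -
  define E where "E = exp (- tau * v / 2)"
  have E2: "exp (- tau * v) = E * E" unfolding E_def by (simp flip: exp_add)
  define p where "p = 1 - th + th * exp (- tau * v) - exp (- tau * (th * v))"
  have "p \<ge> (1 - E)\<^sup>2 * (th * (1 - th))"
  proof (cases "th \<le> 1/2")
    case True
    have "exp (- tau * (th * v)) = exp ((1 - 2 * th) * 0 + (2 * th) * (- tau * v / 2))"
      by (simp add: algebra_simps)
    also have "\<dots> \<le> (1 - 2 * th) * exp 0 + (2 * th) * exp (- tau * v / 2)"
      using convex_onD[OF exp_convex, of "2 * th" 0 "- tau * v / 2"] True th by simp
    finally have "p \<ge> th * (1 - E)\<^sup>2" unfolding p_def E2 E_def[symmetric]
      by (simp add: algebra_simps power2_eq_square)
    moreover have "th * (1 - th) * (1 - E)\<^sup>2 \<le> th * (1 - E)\<^sup>2"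
      using th by (intro mult_right_mono) (auto simp: mult_left_le)
    ultimately show ?thesis by (simp add: mult.commute)
  next
    case False
    have "exp (- tau * (th * v)) = exp ((1 - (2 - 2 * th)) * (- tau * v) + (2 - 2 * th) * (- tau * v / 2))"
      by (simp add: algebra_simps)
    also have "\<dots> \<le> (1 - (2 - 2 * th)) * exp (- tau * v) + (2 - 2 * th) * exp (- tau * v / 2)"
      using convex_onD[OF exp_convex, of "2 - 2 * th" "- tau * v" "- tau * v / 2"] False th by simp
    finally have "p \<ge> (1 - th) * (1 - E)\<^sup>2" unfolding p_def E2 E_def[symmetric]
      by (simp add: algebra_simps power2_eq_square)
    moreover have "th * (1 - th) * (1 - E)\<^sup>2 \<le> (1 - th) * (1 - E)\<^sup>2"
      using th by (intro mult_right_mono) (auto simp: mult_left_le_one_le)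
    ultimately show ?thesis by (simp add: mult.commute)
  qed
  hence "s0 * p \<ge> s0 * ((1 - E)\<^sup>2 * (th * (1 - th)))" using s0_pos by (intro mult_left_mono) auto
  moreover have "f (th * v) - th * f v = s0 * p" unfolding p_def sir_f_def by (simp add: algebra_simps)
  ultimately show ?thesis unfolding E_def by (simp add: mult.assoc)
qed

lemma sub_super_comparison:
  fixes u v :: "nat \<Rightarrow> real \<Rightarrow> real"
  assumes contu: "\<And>n. n \<ge> 1 \<Longrightarrow> continuous_on {a..b} (u n)"
    and contv: "\<And>n. n \<ge> 1 \<Longrightarrow> continuous_on {a..b} (v n)"
    and bdd: "\<And>n t. n \<ge> 1 \<Longrightarrow> t \<in> {a..b} \<Longrightarrow> u n t - v n t \<le> B"
    and init: "\<And>n. n \<ge> 1 \<Longrightarrow> u n a \<le> v n a"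
    and lip: "\<And>n t. n \<ge> 1 \<Longrightarrow> a \<le> t \<Longrightarrow> t < b \<Longrightarrow> u n t > v n t \<Longrightarrow>
                f (u n t) - f (v n t) \<le> Kf * (u n t - v n t)"
    and sub: "\<And>n t. n \<ge> 1 \<Longrightarrow> a \<le> t \<Longrightarrow> t < b \<Longrightarrow> u n t > v n t \<Longrightarrow>
                right_dini_le (u n) t (rhs (\<lambda>j. u j t) n)"
    and super: "\<And>n t. n \<ge> 1 \<Longrightarrow> a \<le> t \<Longrightarrow> t < b \<Longrightarrow> u n t > v n t \<Longrightarrow>
                right_dini_le (\<lambda>s. - v n s) t (- rhs (\<lambda>j. v j t) n)"
    and "n \<ge> 1" "t \<in> {a..b}"
  shows "u n t \<le> v n t"
proof -
  define d where "d n t = u n t - v n t" for n t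
  have "d n t \<le> 0"
  proof (rule lattice_comparison[where d=d and n=n and t=t and B=B and P=lam and Q="lam * (real k + 1)"
        and p="\<lambda>_. lam" and q="\<lambda>n. if n = 1 then lam * (real k + 1) else lam * real k"
        and K="Kf - lam * (real k + 1)"])
    show "continuous_on {a..b} (d n)" if "n \<ge> 1" for n
      unfolding d_def using contu[OF that] contv[OF that] by (intro continuous_intros)
    show "d n t \<le> B" if "n \<ge> 1" "t \<in> {a..b}" for n t using bdd that unfolding d_def by auto
    show "d n a \<le> 0" if "n \<ge> 1" for n using init that unfolding d_def by auto
    fix n t assume n: "n \<ge> 1" and t: "a \<le> t" "t < b" and dpos: "d n t > 0"
    hence uv: "u n t > v n t" unfolding d_def by simp
    have "right_dini_le (d n) t (rhs (\<lambda>j. u j t) n + - rhs (\<lambda>j. v j t) n)"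
      unfolding d_def using right_dini_le_add[OF sub[OF n t uv] super[OF n t uv]] by simp
    moreover have "rhs (\<lambda>j. u j t) n - rhs (\<lambda>j. v j t) n \<le> (Kf - lam * (real k + 1)) * d n t
              + (if n \<ge> 2 then lam * d (n-1) t else 0)
              + (if n = 1 then lam * (real k + 1) else lam * real k) * d (n+1) t"
      using lip[OF n t uv] n unfolding rhs_def d_def
      by (cases "n = 1") (auto simp: algebra_simps numeral_2_eq_2)
    ultimately show "right_dini_le (d n) t ((Kf - lam * (real k + 1)) * d n t
              + (if n \<ge> 2 then lam * d (n-1) t else 0)
              + (if n = 1 then lam * (real k + 1) else lam * real k) * d (n+1) t)"
      by (auto intro: right_dini_le_mono)
  qed (use assms(8,9) lam_pos in auto)
  thus ?thesis unfolding d_def by simp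
qed

section \<open>Dispersion relation and spreading speed\<close>

lemma growth_rate_pos: "growth_rate > 0"
proof -
  have "(sqrt (real k) - 1)\<^sup>2 = real k + 1 - 2 * sqrt (real k)"
    by (simp add: power2_diff)
  hence "0 \<le> real k + 1 - 2 * sqrt (real k)" by (metis zero_le_power2)
  hence "0 \<le> lam * (real k + 1 - 2 * sqrt (real k))" using lam_pos by simp
  thus ?thesis using lam_subcritical by linarith
qed

text \<open>\<open>e\<^sup>-\<^sup>g\<^sup>(\<^sup>n\<^sup>-\<^sup>c\<^sup>t\<^sup>)\<close> solves the system linearised at \<open>0\<close> (away from \<open>n = 1\<close>) exactly
  when \<open>g c = dispersion g\<close>, so \<open>c\<^sub>*\<close> is the least speed of such exponentials.\<close>

definition dispersion :: "real \<Rightarrow> real" where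
  "dispersion g = growth_rate + lam * (exp g - (real k + 1) + real k * exp (- g))"

lemma dispersion_ge: "dispersion g \<ge> growth_rate - lam * (real k + 1 - 2 * sqrt (real k))"
proof -
  have "lam * (2 * sqrt (real k)) \<le> lam * (exp g + real k * exp (- g))"
    using exp_add_mult_exp_neg_ge[of "real k" g] lam_pos by (intro mult_left_mono) auto
  thus ?thesis unfolding dispersion_def by (simp add: algebra_simps)
qed

lemma dispersion_pos: "dispersion g > 0"
  using dispersion_ge[of g] lam_subcritical by simp

lemma dispersion_quotient_bounded_below: "\<exists>m>0. \<forall>g>0. m \<le> dispersion g / g"
proof -
  define \<delta> where "\<delta> = growth_rate - lam * (real k + 1 - 2 * sqrt (real k))"
  have \<delta>: "\<delta> > 0" unfolding \<delta>_def using lam_subcritical by simp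
  have "min lam (\<delta> / (2 * real k)) \<le> dispersion g / g" if g: "g > 0" for g
  proof (cases "g \<le> 2 * real k")
    case True
    have "\<delta> / (2 * real k) \<le> \<delta> / g"
      using True g \<delta> by (intro divide_left_mono) auto
    also have "\<dots> \<le> dispersion g / g"
      using dispersion_ge[of g] g unfolding \<delta>_def by (intro divide_right_mono) auto
    finally show ?thesis by simp
  next
    case False
    have "g\<^sup>2 / 4 \<ge> real k"
    proof -
      have "(2 * real k) * (2 * real k) \<le> g * g" using False by (intro mult_mono) auto
      moreover have "4 * real k \<le> (2 * real k) * (2 * real k)" using k_ge_2 by simp
      ultimately show ?thesis by (simp add: power2_eq_square)
    qed
    hence "g \<le> exp g - (real k + 1)" using exp_ge_quadratic[of g] g by linarith
    hence "g \<le> exp g - (real k + 1) + real k * exp (- g)" by (simp add: add_increasing2)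
    hence "lam * g \<le> lam * (exp g - (real k + 1) + real k * exp (- g))"
      using lam_pos by (intro mult_left_mono) auto
    hence "lam * g \<le> dispersion g" using growth_rate_pos unfolding dispersion_def by simp
    hence "lam \<le> dispersion g / g" using g by (simp add: pos_le_divide_eq)
    thus ?thesis by simp
  qed
  moreover have "min lam (\<delta> / (2 * real k)) > 0" using lam_pos \<delta> k_ge_2 by simp
  ultimately show ?thesis by blast
qed

lemma cstar_eq_INF_dispersion: "cstar k s0 tau eta lam = (INF g\<in>{0<..}. dispersion g / g)"
proof -
  have "eta * (R0 s0 tau eta - 1) = growth_rate" unfolding R0_def using eta_pos by (simp add: field_simps)
  thus ?thesis unfolding cstar_def dispersion_def by simp
qed

lemma bdd_below_dispersion_quotient: "bdd_below ((\<lambda>g. dispersion g / g) ` {0<..})"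
  using dispersion_quotient_bounded_below by (auto intro!: bdd_belowI2)

lemma cstar_pos: "cstar k s0 tau eta lam > 0"
proof -
  obtain m where "m > 0" "\<forall>g>0. m \<le> dispersion g / g"
    using dispersion_quotient_bounded_below by blast
  moreover from this have "m \<le> (INF g\<in>{0<..}. dispersion g / g)"
    by (intro cINF_greatest) auto
  ultimately show ?thesis unfolding cstar_eq_INF_dispersion by simp
qed

lemma cstar_le_dispersion_quotient: "g > 0 \<Longrightarrow> cstar k s0 tau eta lam \<le> dispersion g / g"
  unfolding cstar_eq_INF_dispersion by (rule cINF_lower[OF bdd_below_dispersion_quotient]) auto

lemma dispersion_quotient_less:
  "c > cstar k s0 tau eta lam \<Longrightarrow> \<exists>g>0. dispersion g / g < c"
  unfolding cstar_eq_INF_dispersion using cINF_less_iff[OF _ bdd_below_dispersion_quotient] by auto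

definition pos_root :: "real \<Rightarrow> real" where
  "pos_root y = (y + sqrt (y\<^sup>2 + 4 * real k)) / 2"

lemma pos_root_pos: "pos_root y > 0"
  and pos_root_eq: "pos_root y - real k / pos_root y = y"
  and pos_root_ge: "y \<ge> 0 \<Longrightarrow> pos_root y \<ge> y"
  and pos_root_gt_1: "y \<ge> 0 \<Longrightarrow> pos_root y > 1"
proof -
  have s1: "sqrt (y\<^sup>2 + 4 * real k) > \<bar>y\<bar>"
    using k_ge_2 by (intro real_less_rsqrt) (simp add: power2_eq_square)
  show pos: "pos_root y > 0" unfolding pos_root_def using s1 by simp
  have "pos_root y * pos_root y - real k = y * pos_root y"
    unfolding pos_root_def by (simp add: field_simps power2_eq_square)
  thus "pos_root y - real k / pos_root y = y" using pos by (simp add: field_simps)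
  show "y \<ge> 0 \<Longrightarrow> pos_root y \<ge> y" unfolding pos_root_def using s1 by simp
  assume y: "y \<ge> 0"
  have "0 \<le> y\<^sup>2" "8 \<le> 4 * real k" using k_ge_2 by simp_all
  hence "4 < y\<^sup>2 + 4 * real k" by linarith
  hence "2 < sqrt (y\<^sup>2 + 4 * real k)" using real_less_rsqrt[of 2] by simp
  thus "pos_root y > 1" unfolding pos_root_def using y by simp
qed

text \<open>For \<open>0 < \<beta> < \<pi>\<close>, the choice \<open>e\<^sup>g = pos_root (c \<beta> / (\<lambda> sin \<beta>))\<close> solves the imaginary part
  of the complex dispersion relation; the residual below is then its real part.\<close>

definition dispersion_residual :: "real \<Rightarrow> real \<Rightarrow> real \<Rightarrow> real" where
  "dispersion_residual c \<delta> \<beta> = (let X = pos_root (c * \<beta> / (lam * sin \<beta>)) in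
     growth_rate - \<delta> + lam * ((X + real k / X) * cos \<beta> - (real k + 1)) - c * ln X)"

lemma continuous_on_dispersion_residual:
  assumes "0 < \<beta>1" "\<beta>2 < pi"
  shows "continuous_on {\<beta>1..\<beta>2} (dispersion_residual c \<delta>)"
proof -
  have "\<forall>x\<in>{\<beta>1..\<beta>2}. lam * sin x \<noteq> 0"
  proof
    fix x assume "x \<in> {\<beta>1..\<beta>2}"
    hence "sin x > 0" using assms by (intro sin_gt_zero) auto
    thus "lam * sin x \<noteq> 0" using lam_pos by simp
  qed
  hence "continuous_on {\<beta>1..\<beta>2} (\<lambda>\<beta>. c * \<beta> / (lam * sin \<beta>))"
    by (intro continuous_intros) auto
  moreover have "continuous_on UNIV pos_root"
    unfolding pos_root_def by (intro continuous_intros) auto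
  ultimately have "continuous_on {\<beta>1..\<beta>2} (\<lambda>\<beta>. pos_root (c * \<beta> / (lam * sin \<beta>)))"
    using continuous_on_compose2 by blast
  thus ?thesis unfolding dispersion_residual_def Let_def
    using pos_root_pos by (intro continuous_intros) (auto simp: less_imp_neq[symmetric])
qed

lemma dispersion_residual_pos_near_0:
  assumes c: "0 < c" "c < cstar k s0 tau eta lam"
  shows "\<exists>\<delta>>0. \<forall>\<^sub>F \<beta> in at_right 0. dispersion_residual c \<delta> \<beta> > 0"
proof -
  define X0 where "X0 = pos_root (c / lam)"
  have X0: "X0 > 1" unfolding X0_def using pos_root_gt_1 c lam_pos by simp
  define g0 where "g0 = ln X0"
  have g0: "g0 > 0" unfolding g0_def using X0 by simp
  define \<delta> where "\<delta> = (cstar k s0 tau eta lam - c) * g0 / 2"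
  have \<delta>: "\<delta> > 0" unfolding \<delta>_def using c g0 by simp
  have "((\<lambda>\<beta>. c / lam * inverse (sin \<beta> / \<beta>)) \<longlongrightarrow> c / lam * inverse 1) (at_right 0)"
    by (intro tendsto_intros sin_over_self_tendsto_1) simp
  moreover have "c / lam * inverse (sin \<beta> / \<beta>) = c * \<beta> / (lam * sin \<beta>)" for \<beta>
    by (simp add: divide_inverse mult_ac)
  ultimately have "((\<lambda>\<beta>. pos_root (c * \<beta> / (lam * sin \<beta>))) \<longlongrightarrow> X0) (at_right 0)"
    unfolding X0_def pos_root_def by (auto intro!: tendsto_intros)
  hence "(dispersion_residual c \<delta> \<longlongrightarrow>
           growth_rate - \<delta> + lam * ((X0 + real k / X0) * cos 0 - (real k + 1)) - c * ln X0) (at_right 0)"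
    unfolding dispersion_residual_def Let_def by (intro tendsto_intros) (use X0 in auto)
  also have "growth_rate - \<delta> + lam * ((X0 + real k / X0) * cos 0 - (real k + 1)) - c * ln X0
               = dispersion g0 - \<delta> - c * g0"
    unfolding dispersion_def g0_def using X0 by (simp add: exp_minus field_simps)
  finally have lim: "(dispersion_residual c \<delta> \<longlongrightarrow> dispersion g0 - \<delta> - c * g0) (at_right 0)" .
  have "dispersion g0 \<ge> cstar k s0 tau eta lam * g0"
    using cstar_le_dispersion_quotient[OF g0] g0 by (simp add: pos_le_divide_eq)
  hence "dispersion g0 - \<delta> - c * g0 \<ge> (cstar k s0 tau eta lam - c) * g0 - \<delta>"
    by (simp add: algebra_simps)
  also have "(cstar k s0 tau eta lam - c) * g0 - \<delta> = \<delta>" unfolding \<delta>_def by simp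
  finally have "dispersion g0 - \<delta> - c * g0 > 0" using \<delta> by simp
  hence "\<forall>\<^sub>F \<beta> in at_right 0. dispersion_residual c \<delta> \<beta> > 0"
    using lim order_tendstoD(1) by blast
  with \<delta> show ?thesis by blast
qed

lemma dispersion_residual_neg_near_pi:
  assumes c: "c > 0" and \<delta>: "\<delta> \<ge> 0"
  shows "\<exists>\<beta>. 0 < \<beta> \<and> \<beta> < pi \<and> dispersion_residual c \<delta> \<beta> < 0"
proof -
  define e where "e = min 1 (c / (2 * growth_rate))"
  have e: "0 < e" "e \<le> 1" "e \<le> c / (2 * growth_rate)"
    unfolding e_def using c growth_rate_pos by auto
  define \<beta> where "\<beta> = pi - e"
  have \<beta>: "0 < \<beta>" "\<beta> < pi" "2 \<le> \<beta>" unfolding \<beta>_def using e pi_gt3 by auto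
  have sin_\<beta>: "0 < sin \<beta>" "sin \<beta> \<le> e"
    using sin_gt_zero[OF \<beta>(1,2)] sin_x_le_x[of e] e unfolding \<beta>_def by (auto simp: sin_diff)
  have "cos (pi/3) \<le> cos e" using e pi_gt3 by (intro cos_monotone_0_pi_le) auto
  hence cos_\<beta>: "cos \<beta> \<le> - 1/2" unfolding \<beta>_def by (simp add: cos_diff cos_60)
  define y where "y = c * \<beta> / (lam * sin \<beta>)"
  have y: "y > 0" unfolding y_def using c lam_pos sin_\<beta> \<beta> by simp
  define X where "X = pos_root y"
  have X: "X \<ge> y" "X > 1" unfolding X_def using pos_root_ge pos_root_gt_1 y by auto
  have "(X + real k / X) * cos \<beta> \<le> X * cos \<beta>"
    using X cos_\<beta> by (intro mult_right_mono_neg) auto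
  also have "\<dots> \<le> y * cos \<beta>"
    using X cos_\<beta> by (intro mult_right_mono_neg) auto
  finally have "lam * ((X + real k / X) * cos \<beta>) \<le> lam * (y * cos \<beta>)"
    using lam_pos by (intro mult_left_mono) auto
  also have "lam * (y * cos \<beta>) = c * (\<beta> * cos \<beta>) / sin \<beta>"
    unfolding y_def using lam_pos sin_\<beta> by simp
  also have "\<dots> \<le> - c / sin \<beta>"
  proof -
    have "\<beta> * cos \<beta> \<le> 2 * cos \<beta>" using cos_\<beta> \<beta> by (intro mult_right_mono_neg) auto
    hence "\<beta> * cos \<beta> \<le> -1" using cos_\<beta> by linarith
    hence "c * (\<beta> * cos \<beta>) \<le> - c" using mult_left_mono[OF _ less_imp_le[OF c]] by fastforce
    from divide_right_mono[OF this less_imp_le[OF sin_\<beta>(1)]] show ?thesis by simp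
  qed
  also have "\<dots> \<le> - c / e" using c sin_\<beta> by (simp add: frac_le)
  also have "\<dots> \<le> - 2 * growth_rate"
  proof -
    have "c / (c / (2 * growth_rate)) \<le> c / e" using e c growth_rate_pos by (intro divide_left_mono) auto
    thus ?thesis using c growth_rate_pos by simp
  qed
  finally have "lam * ((X + real k / X) * cos \<beta>) \<le> - 2 * growth_rate" .
  moreover have "c * ln X \<ge> 0" using c X by simp
  moreover have "dispersion_residual c \<delta> \<beta>
      = growth_rate - \<delta> + lam * ((X + real k / X) * cos \<beta>) - lam * (real k + 1) - c * ln X"
    unfolding dispersion_residual_def Let_def X_def y_def by (simp add: algebra_simps)
  ultimately have "dispersion_residual c \<delta> \<beta> < 0"
    using \<delta> growth_rate_pos lam_pos by (smt (verit) mult_nonneg_nonneg of_nat_0_le_iff)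
  thus ?thesis using \<beta> by blast
qed

lemma dispersion_complex_root:
  assumes c: "0 < c" "c < cstar k s0 tau eta lam"
  shows "\<exists>\<delta>>0. \<exists>g>0. \<exists>\<beta>. 0 < \<beta> \<and> \<beta> < pi \<and>
           lam * sin \<beta> * (exp g - real k * exp (- g)) = c * \<beta> \<and>
           growth_rate - \<delta> + lam * ((exp g + real k * exp (- g)) * cos \<beta> - (real k + 1)) = c * g"
proof -
  obtain \<delta> where \<delta>: "\<delta> > 0" and "\<forall>\<^sub>F \<beta> in at_right 0. dispersion_residual c \<delta> \<beta> > 0"
    using dispersion_residual_pos_near_0[OF c] by blast
  then obtain b where b: "b > 0" "\<And>\<beta>. 0 < \<beta> \<Longrightarrow> \<beta> < b \<Longrightarrow> dispersion_residual c \<delta> \<beta> > 0"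
    unfolding eventually_at_right_field by auto
  obtain \<beta>2 where \<beta>2: "0 < \<beta>2" "\<beta>2 < pi" "dispersion_residual c \<delta> \<beta>2 < 0"
    using dispersion_residual_neg_near_pi[OF c(1) less_imp_le[OF \<delta>]] by blast
  define \<beta>1 where "\<beta>1 = min b \<beta>2 / 2"
  have \<beta>1: "0 < \<beta>1" "\<beta>1 < b" "\<beta>1 < \<beta>2" unfolding \<beta>1_def using b \<beta>2 by auto
  obtain \<beta> where \<beta>: "\<beta>1 \<le> \<beta>" "\<beta> \<le> \<beta>2" "dispersion_residual c \<delta> \<beta> = 0"
    using IVT2'[of "dispersion_residual c \<delta>" \<beta>2 0 \<beta>1] b(2)[of \<beta>1] \<beta>1 \<beta>2
      continuous_on_dispersion_residual[OF \<beta>1(1) \<beta>2(2)] by force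
  have \<beta>_pi: "0 < \<beta>" "\<beta> < pi" using \<beta> \<beta>1 \<beta>2 by auto
  have sin_\<beta>: "sin \<beta> > 0" using sin_gt_zero[OF \<beta>_pi] .
  define y where "y = c * \<beta> / (lam * sin \<beta>)"
  have y: "y > 0" unfolding y_def using c lam_pos sin_\<beta> \<beta>_pi by simp
  define g where "g = ln (pos_root y)"
  have g: "g > 0" unfolding g_def using pos_root_gt_1[of y] y by simp
  have exp_g: "exp g = pos_root y" "exp (- g) = 1 / pos_root y"
    unfolding g_def using pos_root_pos by (simp_all add: exp_minus divide_inverse)
  have "lam * sin \<beta> * (exp g - real k * exp (- g)) = lam * sin \<beta> * y"
    using pos_root_eq[of y] exp_g by simp
  also have "\<dots> = c * \<beta>" unfolding y_def using lam_pos sin_\<beta> by simp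
  finally have "lam * sin \<beta> * (exp g - real k * exp (- g)) = c * \<beta>" .
  moreover have "growth_rate - \<delta> + lam * ((exp g + real k * exp (- g)) * cos \<beta> - (real k + 1)) = c * g"
    using \<beta>(3) unfolding dispersion_residual_def Let_def y_def[symmetric] exp_g by (simp add: g_def)
  ultimately show ?thesis using \<delta> g \<beta>_pi by blast
qed

lemma damped_sine_lattice_identity:
  assumes im: "lam * sin b * (exp g - real k * exp (- g)) = c * b"
    and re: "growth_rate - \<delta> + lam * ((exp g + real k * exp (- g)) * cos b - (real k + 1)) = c * g"
  shows "lam * (damped_sine g b (x - 1) + real k * damped_sine g b (x + 1))
           + (growth_rate - \<delta> - lam * (real k + 1)) * damped_sine g b x + c * damped_sine' g b x = 0"
proof -
  have ring: "lam * (E0 * Ep * (S * cb - C * sb) + real k * (E0 * Em * (S * cb + C * sb)))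
      + (A - lam * (real k + 1)) * (E0 * S) + c * (E0 * (- g * S + b * C))
    = E0 * (S * (A + lam * ((Ep + real k * Em) * cb - (real k + 1)) - c * g)
      - C * (lam * sb * (Ep - real k * Em) - c * b))" for E0 Ep Em S C sb cb A :: real
    by (simp add: algebra_simps)
  have "damped_sine g b (x - 1) = exp (- g * x) * exp g * (sin (b * x) * cos b - cos (b * x) * sin b)"
    "damped_sine g b (x + 1) = exp (- g * x) * exp (- g) * (sin (b * x) * cos b + cos (b * x) * sin b)"
    unfolding damped_sine_def
    by (simp_all add: algebra_simps sin_diff sin_add flip: exp_add)
  thus ?thesis using ring[of "exp (- g * x)" "exp g" "sin (b * x)" "cos b" "cos (b * x)" "sin b" "exp (- g)"
      "growth_rate - \<delta>"] im re unfolding damped_sine_def damped_sine'_def by simp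
qed

section \<open>Explicit subsolutions\<close>

definition removal_rate :: real where
  "removal_rate = eta + lam * (real k + 1)"

lemma removal_rate_pos: "removal_rate > 0"
  unfolding removal_rate_def using eta_pos lam_pos by (simp add: add_pos_nonneg)

text \<open>With \<open>\<mu> = removal_rate\<close> these solve \<open>w\<^sub>1' = i\<^sub>0 e\<^sup>-\<^sup>\<mu>\<^sup>x - \<mu> w\<^sub>1\<close> and
  \<open>w\<^sub>n' = \<lambda> w\<^sub>n\<^sub>-\<^sub>1 - \<mu> w\<^sub>n\<close>: the lattice system with every positive term dropped except
  the source and the inflow from \<open>n - 1\<close>.\<close>

definition source_subsolution :: "nat \<Rightarrow> real \<Rightarrow> real" where
  "source_subsolution n x = i0 * lam ^ (n - 1) * x ^ n * exp (- removal_rate * x) / fact n"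

lemma source_subsolution_nonneg: "x \<ge> 0 \<Longrightarrow> source_subsolution n x \<ge> 0"
  unfolding source_subsolution_def using i0_pos lam_pos by simp

lemma source_subsolution_has_derivative:
  assumes "n \<ge> 1"
  shows "(source_subsolution n has_real_derivative
           (if n = 1 then i0 * exp (- removal_rate * x) else lam * source_subsolution (n - 1) x)
           - removal_rate * source_subsolution n x) (at x)"
proof -
  have d: "(source_subsolution n has_real_derivative
      i0 * lam ^ (n - 1) * (real n * x ^ (n - 1) * exp (- removal_rate * x)
        + x ^ n * (exp (- removal_rate * x) * (- removal_rate))) / fact n) (at x)"
    unfolding source_subsolution_def
    by (auto intro!: derivative_eq_intros) (simp add: algebra_simps)
  show ?thesis
  proof (cases "n = 1")
    case True
    show ?thesis using d unfolding True source_subsolution_def by (simp add: algebra_simps)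
  next
    case False
    then obtain m where m: "n = Suc (Suc m)" using assms(1) by (cases n; cases "n - 1") auto
    show ?thesis using False d unfolding source_subsolution_def m
      by (simp add: field_simps fact_Suc del: of_nat_Suc)
  qed
qed

lemma source_subsolution_sub:
  assumes "n \<ge> 1" "x \<ge> 0"
  shows "(if n = 1 then i0 * exp (- removal_rate * x) else lam * source_subsolution (n - 1) x)
           - removal_rate * source_subsolution n x \<le> rhs (\<lambda>j. source_subsolution j x) n"
proof -
  have w: "source_subsolution j x \<ge> 0" for j using source_subsolution_nonneg assms by blast
  have "f (source_subsolution n x) \<ge> - eta * source_subsolution n x" using sir_f_ge_neg w by blast
  moreover have "exp (- removal_rate * x) \<le> 1" using assms removal_rate_pos by simp
  hence "i0 * exp (- removal_rate * x) \<le> i0" using i0_pos by simp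
  moreover have "lam * (real k + 1) * source_subsolution 2 x \<ge> 0"
    "lam * (real k * source_subsolution (n + 1) x) \<ge> 0" using w lam_pos by simp_all
  ultimately show ?thesis unfolding rhs_def removal_rate_def by (auto simp: algebra_simps)
qed

lemma source_subsolution_le:
  assumes "0 \<le> x" "x \<le> 1" "n \<ge> 1"
  shows "source_subsolution n x \<le> i0 / lam * exp lam"
proof -
  have "source_subsolution n x
      = i0 / lam * ((lam * x) ^ n / fact n) * exp (- removal_rate * x)"
    unfolding source_subsolution_def using assms lam_pos
    by (simp add: power_mult_distrib field_simps power_eq_if[of lam n])
  also have "\<dots> \<le> i0 / lam * exp (lam * x) * 1"
    using assms lam_pos i0_pos removal_rate_pos power_div_fact_le_exp[of "lam * x" n]
    by (intro mult_mono mult_left_mono) auto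
  also have "\<dots> \<le> i0 / lam * exp lam"
  proof -
    have "exp (lam * x) \<le> exp lam" using assms lam_pos by (simp add: mult_left_le)
    thus ?thesis using lam_pos i0_pos by (simp add: divide_right_mono)
  qed
  finally show ?thesis .
qed

lemma sine_bump_subsolution:
  assumes \<delta>: "\<delta> > 0" and g: "g > 0" and b: "0 < b" "b < pi"
    and im: "lam * sin b * (exp g - real k * exp (- g)) = c * b"
    and re: "growth_rate - \<delta> + lam * ((exp g + real k * exp (- g)) * cos b - (real k + 1)) = c * g"
    and \<epsilon>: "0 < \<epsilon>" "\<epsilon> \<le> \<delta> / (s0 * tau\<^sup>2)"
    and n: "n \<ge> 2" and x: "0 < real n - z" "real n - z < pi / b"
  shows "\<epsilon> * (- c * damped_sine' g b (real n - z)) \<le> rhs (\<lambda>j. \<epsilon> * sine_bump g b (real j - z)) n"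
proof -
  define x where "x = real n - z"
  define v where "v = \<epsilon> * damped_sine g b x"
  have bump_x: "sine_bump g b x = damped_sine g b x"
    using sine_bump_eq_damped_sine[of x b g] x unfolding x_def by simp
  have v: "0 \<le> v" "v \<le> \<epsilon>"
    unfolding v_def using bump_x[symmetric] sine_bump_bounds[OF less_imp_le[OF g] b(1), of x] \<epsilon>
    by (auto simp: mult_left_le)
  have "s0 * tau\<^sup>2 * v \<le> s0 * tau\<^sup>2 * \<epsilon>" using v s0_pos by (intro mult_left_mono) auto
  also have "\<dots> \<le> \<delta>" using \<epsilon> s0_pos tau_pos by (simp add: pos_le_divide_eq mult.commute)
  finally have "s0 * tau\<^sup>2 * v \<le> \<delta>" .
  hence "s0 * tau\<^sup>2 * v\<^sup>2 \<le> \<delta> * v"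
    using v by (simp add: power2_eq_square mult_right_mono mult.assoc[symmetric])
  hence f_v: "f v \<ge> (growth_rate - \<delta>) * v"
    using sir_f_ge_quadratic[OF v(1)] by (simp add: algebra_simps)
  have nb: "\<epsilon> * damped_sine g b (x - 1) \<le> \<epsilon> * sine_bump g b (x - 1)"
    "\<epsilon> * damped_sine g b (x + 1) \<le> \<epsilon> * sine_bump g b (x + 1)"
    using sine_bump_ge_damped_sine_neighbours[OF b x[folded x_def]] \<epsilon> by simp_all
  have "\<epsilon> * (- c * damped_sine' g b x)
      = \<epsilon> * (lam * (damped_sine g b (x - 1) + real k * damped_sine g b (x + 1))
               + (growth_rate - \<delta> - lam * (real k + 1)) * damped_sine g b x)"
  proof -
    have "- c * damped_sine' g b x = lam * (damped_sine g b (x - 1) + real k * damped_sine g b (x + 1))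
               + (growth_rate - \<delta> - lam * (real k + 1)) * damped_sine g b x"
      using damped_sine_lattice_identity[OF im re, of x] by linarith
    thus ?thesis by simp
  qed
  also have "\<dots> = (growth_rate - \<delta>) * v
      + lam * (\<epsilon> * damped_sine g b (x - 1) - (real k + 1) * v + real k * (\<epsilon> * damped_sine g b (x + 1)))"
    unfolding v_def by (simp add: algebra_simps)
  also have "\<dots> \<le> f v
      + lam * (\<epsilon> * sine_bump g b (x - 1) - (real k + 1) * v + real k * (\<epsilon> * sine_bump g b (x + 1)))"
    using f_v nb lam_pos by (smt (verit) mult_left_mono of_nat_0_le_iff)
  also have "\<dots> = rhs (\<lambda>j. \<epsilon> * sine_bump g b (real j - z)) n"
    using n unfolding rhs_def x_def v_def bump_x[unfolded x_def, symmetric]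
    by (simp add: of_nat_diff algebra_simps)
  finally show ?thesis unfolding x_def .
qed

lemma travelling_sine_bump_right_dini:
  assumes c: "0 < c" and \<delta>: "\<delta> > 0" and g: "g > 0" and b: "0 < b" "b < pi"
    and im: "lam * sin b * (exp g - real k * exp (- g)) = c * b"
    and re: "growth_rate - \<delta> + lam * ((exp g + real k * exp (- g)) * cos b - (real k + 1)) = c * g"
    and \<epsilon>: "0 < \<epsilon>" "\<epsilon> \<le> \<delta> / (s0 * tau\<^sup>2)"
    and n: "n \<ge> 1" and t: "s \<le> t" and pos: "0 < \<epsilon> * sine_bump g b (real n - 1 - c * (t - s))"
  shows "right_dini_le (\<lambda>t. \<epsilon> * sine_bump g b (real n - 1 - c * (t - s))) t
           (rhs (\<lambda>j. \<epsilon> * sine_bump g b (real j - 1 - c * (t - s))) n)"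
proof -
  define z where "z = 1 + c * (t - s)"
  from pos \<epsilon> have "sine_bump g b (real n - 1 - c * (t - s)) > 0" by (simp add: zero_less_mult_iff)
  from sine_bump_pos_imp[OF b(1) this]
  have x: "0 < real n - z" "real n - z < pi / b" unfolding z_def by simp_all
  have "c * (t - s) \<ge> 0" using c t by simp
  hence n2: "n \<ge> 2" using x(1) n unfolding z_def by (cases "n = 1") auto
  have dd: "((\<lambda>r. real n - 1 - c * (r - s)) has_real_derivative - c) (at t)"
    by (auto intro!: derivative_eq_intros)
  define S where "S = {r. 0 < real n - 1 - c * (r - s) \<and> real n - 1 - c * (r - s) < pi / b}"
  have S: "open S" "t \<in> S"
    unfolding S_def using x unfolding z_def by (auto intro!: open_Collect_conj open_Collect_less continuous_intros)
  have "((\<lambda>r. \<epsilon> * damped_sine g b (real n - 1 - c * (r - s))) has_real_derivative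
      \<epsilon> * (- c * damped_sine' g b (real n - z))) (at t)"
    using DERIV_cmult[OF DERIV_chain2[OF damped_sine_has_derivative dd], of \<epsilon>]
    unfolding z_def by (simp add: algebra_simps)
  from has_field_derivative_transform_within_open[OF this S]
  have "((\<lambda>t. \<epsilon> * sine_bump g b (real n - 1 - c * (t - s))) has_real_derivative
      \<epsilon> * (- c * damped_sine' g b (real n - z))) (at t)"
    using sine_bump_eq_damped_sine unfolding S_def by simp
  hence dini: "right_dini_le (\<lambda>t. \<epsilon> * sine_bump g b (real n - 1 - c * (t - s))) t
      (\<epsilon> * (- c * damped_sine' g b (real n - z)))"
    by (intro has_real_derivative_right_dini_le) (rule has_field_derivative_at_within)
  have "(\<lambda>j. \<epsilon> * sine_bump g b (real j - z)) = (\<lambda>j. \<epsilon> * sine_bump g b (real j - 1 - c * (t - s)))"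
    unfolding z_def by (simp add: algebra_simps)
  with sine_bump_subsolution[OF \<delta> g b im re \<epsilon> n2 x]
  have "\<epsilon> * (- c * damped_sine' g b (real n - z)) \<le> rhs (\<lambda>j. \<epsilon> * sine_bump g b (real j - 1 - c * (t - s))) n"
    by simp
  with dini show ?thesis by (rule right_dini_le_mono)
qed

end

section \<open>Spreading of the solution\<close>

locale sir_solution = sir_lattice +
  fixes I :: "nat \<Rightarrow> real \<Rightarrow> real" and Iinf :: "nat \<Rightarrow> real"
  assumes Iinf_pos: "\<And>n. n \<ge> 1 \<Longrightarrow> Iinf n > 0"
    and Iinf_bdd: "\<exists>B. \<forall>n\<ge>1. \<bar>Iinf n\<bar> \<le> B"
    and Iinf_eq: "\<And>n. n \<ge> 2 \<Longrightarrow>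
        0 = f (Iinf n) + lam * (Iinf (n - 1) - (real k + 1) * Iinf n + real k * Iinf (n + 1))"
    and Iinf_eq1: "0 = f (Iinf 1) + i0 + lam * (real k + 1) * (- Iinf 1 + Iinf 2)"
    and I_bdd: "\<And>T. \<exists>B. \<forall>n\<ge>1. \<forall>t\<in>{0..T}. \<bar>I n t\<bar> \<le> B"
    and I_ode: "\<And>n t. n \<ge> 2 \<Longrightarrow> t \<ge> 0 \<Longrightarrow>
        (I n has_real_derivative
          f (I n t) + lam * (I (n - 1) t - (real k + 1) * I n t + real k * I (n + 1) t))
        (at t within {0..})"
    and I_ode1: "\<And>t. t \<ge> 0 \<Longrightarrow>
        (I 1 has_real_derivative f (I 1 t) + i0 + lam * (real k + 1) * (- I 1 t + I 2 t))
        (at t within {0..})"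
    and I_init: "\<And>n. n \<ge> 1 \<Longrightarrow> I n 0 = 0"
begin

lemma I_has_derivative:
  "n \<ge> 1 \<Longrightarrow> t \<ge> 0 \<Longrightarrow> (I n has_real_derivative rhs (\<lambda>j. I j t) n) (at t within {0..})"
  using I_ode[of n t] I_ode1[of t] unfolding rhs_def by (cases "n = 1") (auto simp: algebra_simps)

lemma continuous_on_I: "n \<ge> 1 \<Longrightarrow> 0 \<le> a \<Longrightarrow> continuous_on {a..b} (I n)"
  using DERIV_continuous_on[OF I_has_derivative] by (rule continuous_on_subset) auto

lemma rhs_Iinf: "n \<ge> 1 \<Longrightarrow> rhs Iinf n = 0"
  using Iinf_eq[of n] Iinf_eq1 unfolding rhs_def by (auto simp: algebra_simps)

lemma right_dini_le_I: "n \<ge> 1 \<Longrightarrow> t \<ge> 0 \<Longrightarrow> right_dini_le (I n) t (rhs (\<lambda>j. I j t) n)"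
  by (rule has_real_derivative_right_dini_le, rule has_field_derivative_subset[OF I_has_derivative])
     auto

lemma right_dini_le_neg_I:
  "n \<ge> 1 \<Longrightarrow> t \<ge> 0 \<Longrightarrow> right_dini_le (\<lambda>s. - I n s) t (- rhs (\<lambda>j. I j t) n)"
  by (rule has_real_derivative_right_dini_le,
      rule has_field_derivative_subset[OF DERIV_minus[OF I_has_derivative]]) auto

lemma I_nonneg: assumes "n \<ge> 1" "t \<ge> 0" shows "I n t \<ge> 0"
proof -
  obtain B where B: "\<forall>n\<ge>1. \<forall>s\<in>{0..t}. \<bar>I n s\<bar> \<le> B" using I_bdd by blast
  show ?thesis
  proof (rule sub_super_comparison[where a=0 and b=t and n=n and t=t and B=B
        and Kf="s0 * tau * exp (tau * B)" and u="\<lambda>_ _. 0" and v=I])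
    show "0 - I n s \<le> B" if "n \<ge> 1" "s \<in> {0..t}" for n s using B that by force
    show "f 0 - f (I n s) \<le> s0 * tau * exp (tau * B) * (0 - I n s)"
      if "n \<ge> 1" "0 \<le> s" "s < t" "I n s < 0" for n s
    proof -
      have "- I n s \<le> B" using B that by force
      hence "tau * (- I n s) \<le> tau * B" using tau_pos by (intro mult_left_mono) auto
      hence "exp (- tau * I n s) \<le> exp (tau * B)" by simp
      hence "s0 * tau * exp (- tau * I n s) * (0 - I n s) \<le> s0 * tau * exp (tau * B) * (0 - I n s)"
        using that s0_pos tau_pos by (intro mult_right_mono mult_left_mono) auto
      thus ?thesis using sir_f_diff_le[of "I n s" 0] that by simp
    qed
    show "right_dini_le (\<lambda>s. 0) s (rhs (\<lambda>j. 0) n)" for n s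
      by (rule right_dini_le_const) (simp add: rhs_def i0_pos less_imp_le)
  qed (use assms I_init continuous_on_I right_dini_le_neg_I in auto)
qed

lemma I_le_Iinf: assumes "n \<ge> 1" "t \<ge> 0" shows "I n t \<le> Iinf n"
proof -
  obtain B where B: "\<forall>n\<ge>1. \<forall>s\<in>{0..t}. \<bar>I n s\<bar> \<le> B" using I_bdd by blast
  show ?thesis
  proof (rule sub_super_comparison[where a=0 and b=t and n=n and t=t and B=B
        and Kf="s0 * tau" and u=I and v="\<lambda>n _. Iinf n"])
    show "I n s - Iinf n \<le> B" if "n \<ge> 1" "s \<in> {0..t}" for n s
      using B that Iinf_pos[OF that(1)] by force
    show "right_dini_le (\<lambda>s. - Iinf n) s (- rhs Iinf n)" if "n \<ge> 1" for n s
      by (rule right_dini_le_const) (simp add: rhs_Iinf[OF that])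
  qed (use assms I_init Iinf_pos continuous_on_I right_dini_le_I sir_f_diff_le_nonneg
       in \<open>auto simp: less_imp_le\<close>)
qed

lemma I_le_exponential:
  assumes g: "g > 0" and n: "n \<ge> 1" and t: "t \<ge> 0"
  shows "I n t \<le> i0 * exp g / (lam * (exp g - exp (- g))) * exp (- g * (real n - dispersion g / g * t))"
proof -
  define A where "A = i0 * exp g / (lam * (exp g - exp (- g)))"
  define w where "w n s = A * exp (- g * (real n - dispersion g / g * s))" for n s
  have ed: "exp g - exp (- g) > 0" using g by simp
  have A: "A > 0" unfolding A_def using ed i0_pos lam_pos by simp
  have w_pos: "w n s > 0" for n s unfolding w_def using A by simp
  have w_shift: "w (n - 1) s = exp g * w n s" "w (n + 1) s = exp (- g) * w n s" if "n \<ge> 1" for n s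
    using that unfolding w_def by (simp_all add: of_nat_diff algebra_simps flip: exp_add)
  have w_deriv: "((\<lambda>s. - w n s) has_real_derivative - (dispersion g * w n s)) (at s)" for n s
    unfolding w_def using g by (auto intro!: derivative_eq_intros simp: field_simps)
  have w_super: "- (dispersion g * w n s) \<le> - rhs (\<lambda>j. w j s) n" if "n \<ge> 1" "s \<ge> 0" for n s
  proof (cases "n = 1")
    case True
    have "- g * (real 1 - dispersion g / g * s) = - g + dispersion g * s" using g by (simp add: field_simps)
    moreover have "0 \<le> dispersion g * s" using dispersion_pos[of g] that(2) by simp
    ultimately have "w 1 s \<ge> A * exp (- g)" unfolding w_def using A by simp
    hence "lam * (exp g - exp (- g)) * w 1 s \<ge> lam * (exp g - exp (- g)) * (A * exp (- g))"
      using lam_pos ed by (intro mult_left_mono) auto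
    also have "lam * (exp g - exp (- g)) * (A * exp (- g)) = i0"
      unfolding A_def using lam_pos ed by (simp add: field_simps exp_minus)
    finally show ?thesis using True sir_f_le_linear[of "w 1 s"] w_shift[of 1 s]
      unfolding rhs_def dispersion_def by (simp add: algebra_simps numeral_2_eq_2)
  next
    case False
    thus ?thesis using sir_f_le_linear[of "w n s"] w_shift[OF that(1)]
      unfolding rhs_def dispersion_def by (simp add: algebra_simps)
  qed
  obtain B where B: "\<forall>n\<ge>1. \<forall>s\<in>{0..t}. \<bar>I n s\<bar> \<le> B" using I_bdd by blast
  have "I n t \<le> w n t"
  proof (rule sub_super_comparison[where a=0 and b=t and n=n and t=t and B=B
        and Kf="s0 * tau" and u=I and v=w])
    show "continuous_on {0..t} (w n)" for n unfolding w_def by (intro continuous_intros)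
    show "I n s - w n s \<le> B" if "n \<ge> 1" "s \<in> {0..t}" for n s
      using B that w_pos[of n s] by force
    show "right_dini_le (\<lambda>s. - w n s) s (- rhs (\<lambda>j. w j s) n)" if "n \<ge> 1" "0 \<le> s" for n s
      using has_real_derivative_right_dini_le[OF has_field_derivative_at_within[OF w_deriv]]
        w_super[OF that] by (rule right_dini_le_mono)
  qed (use n t I_init w_pos continuous_on_I right_dini_le_I sir_f_diff_le_nonneg
       in \<open>auto simp: less_imp_le\<close>)
  thus ?thesis unfolding w_def A_def .
qed

lemma I_vanishes_ahead:
  assumes c: "c > cstar k s0 tau eta lam" and \<epsilon>: "\<epsilon> > 0"
  shows "\<forall>\<^sub>F t in at_top. \<forall>n. n \<ge> 1 \<and> real n \<ge> c * t \<longrightarrow> \<bar>I n t\<bar> \<le> \<epsilon>"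
proof -
  obtain g where g: "g > 0" "dispersion g / g < c" using dispersion_quotient_less[OF c] by blast
  define A where "A = i0 * exp g / (lam * (exp g - exp (- g)))"
  have A: "A > 0" unfolding A_def using g i0_pos lam_pos by simp
  define r where "r = g * (c - dispersion g / g)"
  have r: "r > 0" unfolding r_def using g by simp
  have "\<bar>I n t\<bar> \<le> \<epsilon>" if t: "t \<ge> max 0 (ln (A / \<epsilon>) / r)" and n: "n \<ge> 1" "real n \<ge> c * t" for t n
  proof -
    have "I n t \<le> A * exp (- g * (real n - dispersion g / g * t))"
      using I_le_exponential[OF g(1) n(1)] t unfolding A_def by simp
    also have "\<dots> \<le> A * exp (- (r * t))"
    proof -
      have "g * (c * t - dispersion g / g * t) \<le> g * (real n - dispersion g / g * t)"
        using n g by (intro mult_left_mono) auto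
      thus ?thesis using A unfolding r_def by (simp add: algebra_simps)
    qed
    also have "\<dots> \<le> A * exp (- ln (A / \<epsilon>))"
      using t r A by (simp add: pos_divide_le_eq mult.commute)
    also have "\<dots> = \<epsilon>" using A \<epsilon> by (simp add: exp_minus)
    finally show ?thesis using I_nonneg[OF n(1)] t by simp
  qed
  thus ?thesis unfolding eventually_at_top_linorder by blast
qed

lemma I_ge_source_subsolution:
  assumes n: "n \<ge> 1" and s: "s \<ge> 0"
  shows "source_subsolution n 1 \<le> I n (s + 1)"
proof -
  have "source_subsolution n ((s + 1) - s) \<le> I n (s + 1)"
  proof (rule sub_super_comparison[where a=s and b="s + 1" and n=n and t="s + 1"
        and B="i0 / lam * exp lam" and Kf="s0 * tau" and u="\<lambda>n t. source_subsolution n (t - s)" and v=I])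
    show "continuous_on {s..s+1} (\<lambda>t. source_subsolution n (t - s))" for n
      unfolding source_subsolution_def by (intro continuous_intros) auto
    show "source_subsolution n (t - s) - I n t \<le> i0 / lam * exp lam" if "n \<ge> 1" "t \<in> {s..s+1}" for n t
      using source_subsolution_le[of "t - s" n] I_nonneg[of n t] that s by auto
    show "right_dini_le (\<lambda>t. source_subsolution n (t - s)) t (rhs (\<lambda>j. source_subsolution j (t - s)) n)"
      if "n \<ge> 1" "s \<le> t" for n t
    proof -
      have "((\<lambda>t. t - s) has_real_derivative 1) (at t)" by (auto intro!: derivative_eq_intros)
      from DERIV_chain2[OF source_subsolution_has_derivative[OF that(1)] this]
      have "right_dini_le (\<lambda>t. source_subsolution n (t - s)) t
          ((if n = 1 then i0 * exp (- removal_rate * (t - s)) else lam * source_subsolution (n - 1) (t - s))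
           - removal_rate * source_subsolution n (t - s))"
        by (intro has_real_derivative_right_dini_le) (rule has_field_derivative_at_within, simp)
      moreover have "0 \<le> t - s" using that(2) by simp
      ultimately show ?thesis using source_subsolution_sub[OF that(1), of "t - s"] right_dini_le_mono by blast
    qed
    show "source_subsolution n (s - s) \<le> I n s" if "n \<ge> 1" for n
      using I_nonneg[OF that s] that by (simp add: source_subsolution_def power_0_left)
    show "f (source_subsolution n (t - s)) - f (I n t) \<le> s0 * tau * (source_subsolution n (t - s) - I n t)"
      if "n \<ge> 1" "s \<le> t" "I n t < source_subsolution n (t - s)" for n t
      using sir_f_diff_le_nonneg[of "I n t" "source_subsolution n (t - s)"] I_nonneg[OF that(1)] that s
      by simp
    show "continuous_on {s..s+1} (I n)" if "n \<ge> 1" for n using continuous_on_I that s by simp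
    show "right_dini_le (\<lambda>s. - I n s) t (- rhs (\<lambda>j. I j t) n)" if "n \<ge> 1" "s \<le> t" for n t
      using right_dini_le_neg_I that s by simp
  qed (use n in auto)
  thus ?thesis by simp
qed

lemma I_ge_on_initial_segment: "\<exists>\<epsilon>>0. \<forall>n t. 1 \<le> n \<longrightarrow> n \<le> N \<longrightarrow> 1 \<le> t \<longrightarrow> \<epsilon> \<le> I n t"
proof -
  define \<epsilon> where "\<epsilon> = Min ((\<lambda>n. source_subsolution n 1) ` {1..max 1 N})"
  have "\<epsilon> > 0" unfolding \<epsilon>_def source_subsolution_def using i0_pos lam_pos by (subst Min_gr_iff) auto
  moreover have "\<epsilon> \<le> I n t" if "1 \<le> n" "n \<le> N" "1 \<le> t" for n t
  proof -
    have "\<epsilon> \<le> source_subsolution n 1" unfolding \<epsilon>_def using that by (intro Min_le) auto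
    also have "\<dots> \<le> I n ((t - 1) + 1)" using I_ge_source_subsolution[of n "t - 1"] that by simp
    finally show ?thesis by simp
  qed
  ultimately show ?thesis by blast
qed

lemma I_ge_sine_bump:
  assumes c: "0 < c" and \<delta>: "\<delta> > 0" and g: "g > 0" and b: "0 < b" "b < pi"
    and im: "lam * sin b * (exp g - real k * exp (- g)) = c * b"
    and re: "growth_rate - \<delta> + lam * ((exp g + real k * exp (- g)) * cos b - (real k + 1)) = c * g"
    and \<epsilon>: "0 < \<epsilon>" "\<epsilon> \<le> \<delta> / (s0 * tau\<^sup>2)"
    and s: "0 \<le> s" "s \<le> t"
    and init: "\<And>n. n \<ge> 1 \<Longrightarrow> \<epsilon> * sine_bump g b (real n - 1) \<le> I n s"
    and n: "n \<ge> 1"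
  shows "\<epsilon> * sine_bump g b (real n - 1 - c * (t - s)) \<le> I n t"
proof -
  define u where "u n t = \<epsilon> * sine_bump g b (real n - 1 - c * (t - s))" for n :: nat and t
  have u: "0 \<le> u n t" "u n t \<le> \<epsilon>" for n t
    unfolding u_def using sine_bump_bounds[OF less_imp_le[OF g] b(1)] \<epsilon> by (auto simp: mult_left_le)
  have "u n t \<le> I n t"
  proof (rule sub_super_comparison[where a=s and b=t and n=n and t=t and B=\<epsilon> and Kf="s0 * tau"
        and u=u and v=I])
    show "continuous_on {s..t} (u n)" for n
      unfolding u_def by (intro continuous_intros continuous_on_compose2[OF continuous_on_sine_bump]) auto
    show "u n t' - I n t' \<le> \<epsilon>" if "n \<ge> 1" "t' \<in> {s..t}" for n t'
      using u[of n t'] I_nonneg[of n t'] that s by auto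
    show "f (u n t') - f (I n t') \<le> s0 * tau * (u n t' - I n t')"
      if "n \<ge> 1" "s \<le> t'" "I n t' < u n t'" for n t'
      using sir_f_diff_le_nonneg[of "I n t'" "u n t'"] I_nonneg[OF that(1)] that s by simp
    show "right_dini_le (u n) t' (rhs (\<lambda>j. u j t') n)"
      if "n \<ge> 1" "s \<le> t'" "I n t' < u n t'" for n t'
    proof -
      have "0 \<le> I n t'" using I_nonneg[OF that(1)] that(2) s(1) by simp
      thus ?thesis using travelling_sine_bump_right_dini[OF c \<delta> g b im re \<epsilon> that(1,2)] that(3)
        unfolding u_def by simp
    qed
    show "continuous_on {s..t} (I n)" if "n \<ge> 1" for n using continuous_on_I that s by simp
    show "right_dini_le (\<lambda>s. - I n s) t' (- rhs (\<lambda>j. I j t') n)" if "n \<ge> 1" "s \<le> t'" for n t'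
      using right_dini_le_neg_I that s by simp
  qed (use init n s in \<open>auto simp: u_def\<close>)
  thus ?thesis unfolding u_def .
qed

lemma I_above_initial_sine_bump:
  assumes g: "g > 0" and b: "0 < b" and \<delta>: "\<delta> > 0"
  obtains \<epsilon> where "0 < \<epsilon>" "\<epsilon> \<le> \<delta> / (s0 * tau\<^sup>2)"
    "\<And>n t. 1 \<le> n \<Longrightarrow> real n \<le> 1 + pi / b \<Longrightarrow> 1 \<le> t \<Longrightarrow> \<epsilon> \<le> I n t"
    "\<And>n t. 1 \<le> n \<Longrightarrow> 1 \<le> t \<Longrightarrow> \<epsilon> * sine_bump g b (real n - 1) \<le> I n t"
proof -
  obtain \<epsilon>0 where \<epsilon>0: "\<epsilon>0 > 0"
    "\<And>n t. 1 \<le> n \<Longrightarrow> n \<le> nat \<lceil>1 + pi / b\<rceil> \<Longrightarrow> 1 \<le> t \<Longrightarrow> \<epsilon>0 \<le> I n t"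
    using I_ge_on_initial_segment by blast
  define \<epsilon> where "\<epsilon> = min \<epsilon>0 (\<delta> / (s0 * tau\<^sup>2))"
  have \<epsilon>: "0 < \<epsilon>" "\<epsilon> \<le> \<delta> / (s0 * tau\<^sup>2)" "\<epsilon> \<le> \<epsilon>0"
    unfolding \<epsilon>_def using \<epsilon>0 \<delta> s0_pos tau_pos by auto
  have near: "\<epsilon> \<le> I n t" if "1 \<le> n" "real n \<le> 1 + pi / b" "1 \<le> t" for n t
    using \<epsilon>0(2)[of n t] \<epsilon>(3) that by (simp add: le_nat_iff le_ceiling_iff)
  have "\<epsilon> * sine_bump g b (real n - 1) \<le> I n t" if "1 \<le> n" "1 \<le> t" for n t
  proof (cases "sine_bump g b (real n - 1) > 0")
    case True
    hence "real n \<le> 1 + pi / b" using sine_bump_pos_imp(2)[OF b] by fastforce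
    moreover have "\<epsilon> * sine_bump g b (real n - 1) \<le> \<epsilon>"
      using sine_bump_bounds[OF less_imp_le[OF g] b] \<epsilon> by (simp add: mult_left_le)
    ultimately show ?thesis using near that by fastforce
  next
    case False
    hence "sine_bump g b (real n - 1) = 0"
      using sine_bump_bounds(1)[OF less_imp_le[OF g] b, of "real n - 1"] by simp
    thus ?thesis using I_nonneg[of n t] that by simp
  qed
  with \<epsilon>(1,2) near show ?thesis using that by blast
qed

text \<open>A sine bump travelling at a speed between \<open>c\<close> and \<open>c\<^sub>*\<close>, started at a suitable time \<open>s \<ge> 1\<close>
  behind the source, has its maximum at site \<open>n\<close> at time \<open>t\<close>.\<close>

lemma I_bounded_below_behind_front:
  assumes c: "0 < c" "c < cstar k s0 tau eta lam"
  shows "\<exists>m>0. \<exists>T. \<forall>t\<ge>T. \<forall>n\<ge>1. real n \<le> c * t \<longrightarrow> m \<le> I n t"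
proof -
  define c' where "c' = (c + cstar k s0 tau eta lam) / 2"
  have c': "0 < c'" "c' < cstar k s0 tau eta lam" "c < c'" unfolding c'_def using c by auto
  obtain \<delta> g b where \<delta>: "\<delta> > 0" and g: "g > 0" and b: "0 < b" "b < pi"
    and im: "lam * sin b * (exp g - real k * exp (- g)) = c' * b"
    and re: "growth_rate - \<delta> + lam * ((exp g + real k * exp (- g)) * cos b - (real k + 1)) = c' * g"
    using dispersion_complex_root[OF c'(1,2)] by blast
  obtain \<epsilon> where \<epsilon>: "0 < \<epsilon>" "\<epsilon> \<le> \<delta> / (s0 * tau\<^sup>2)"
    and near: "\<And>n t. 1 \<le> n \<Longrightarrow> real n \<le> 1 + pi / b \<Longrightarrow> 1 \<le> t \<Longrightarrow> \<epsilon> \<le> I n t"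
    and init: "\<And>n t. 1 \<le> n \<Longrightarrow> 1 \<le> t \<Longrightarrow> \<epsilon> * sine_bump g b (real n - 1) \<le> I n t"
    using I_above_initial_sine_bump[OF g b(1) \<delta>] by blast
  define L where "L = pi / b"
  have L: "L > 1" unfolding L_def using b by (simp add: field_simps)
  define m where "m = \<epsilon> * exp (- g * (L / 2))"
  have "sine_bump g b (L / 2) = damped_sine g b (L / 2)"
    by (rule sine_bump_eq_damped_sine) (use L in \<open>auto simp: L_def\<close>)
  moreover have "b * (L / 2) = pi / 2" unfolding L_def using b by simp
  ultimately have bump_top: "\<epsilon> * sine_bump g b (L / 2) = m"
    unfolding m_def damped_sine_def by simp
  have m: "0 < m" "m \<le> \<epsilon>" unfolding m_def using \<epsilon> g L by (auto simp: mult_left_le)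
  have "m \<le> I n t" if t: "t \<ge> max 1 (c' / (c' - c))" and n: "n \<ge> 1" "real n \<le> c * t" for t n
  proof (cases "real n - 1 \<le> L / 2")
    case True
    hence "real n \<le> 1 + pi / b" using L unfolding L_def by simp
    thus ?thesis using near[OF n(1)] m t by fastforce
  next
    case False
    define s where "s = t - (real n - 1 - L / 2) / c'"
    have "s \<le> t" unfolding s_def using False c' by simp
    have "(real n - 1 - L / 2) / c' \<le> c * t / c'" using n c' L by (intro divide_right_mono) auto
    hence "s \<ge> t * ((c' - c) / c')" unfolding s_def using c' by (simp add: field_simps)
    moreover have "t * ((c' - c) / c') \<ge> 1" using t c' by (simp add: field_simps)
    ultimately have "s \<ge> 1" by simp
    hence "\<epsilon> * sine_bump g b (real n - 1 - c' * (t - s)) \<le> I n t"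
      using I_ge_sine_bump[OF c'(1) \<delta> g b im re \<epsilon> _ \<open>s \<le> t\<close> init n(1)] by simp
    moreover have "real n - 1 - c' * (t - s) = L / 2" unfolding s_def using c' by simp
    ultimately show ?thesis using bump_top by simp
  qed
  thus ?thesis using m by blast
qed

lemma Iinf_bounded_below: "\<exists>m>0. \<forall>n\<ge>1. m \<le> Iinf n"
proof -
  obtain m T where m: "m > 0" "\<And>t n. t \<ge> T \<Longrightarrow> n \<ge> 1 \<Longrightarrow> real n \<le> cstar k s0 tau eta lam / 2 * t \<Longrightarrow> m \<le> I n t"
    using I_bounded_below_behind_front[of "cstar k s0 tau eta lam / 2"] cstar_pos by auto
  have "m \<le> Iinf n" if n: "n \<ge> 1" for n
  proof -
    define t where "t = max (max T 0) (2 * real n / cstar k s0 tau eta lam)"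
    have "2 * real n / cstar k s0 tau eta lam \<le> t" unfolding t_def by simp
    hence "2 * real n \<le> t * cstar k s0 tau eta lam" using cstar_pos by (simp add: pos_divide_le_eq)
    hence "real n \<le> cstar k s0 tau eta lam / 2 * t" by (simp add: algebra_simps)
    hence "m \<le> I n t" using m(2)[of t n] n unfolding t_def by simp
    also have "I n t \<le> Iinf n" using I_le_Iinf[OF n] unfolding t_def by simp
    finally show ?thesis .
  qed
  thus ?thesis using m(1) by blast
qed

lemma logistic_profile_subsolution:
  assumes T: "0 < T" "T \<le> 1" and C: "C > 0" and n: "n \<ge> 1"
    and pos: "0 < T * Iinf n - C * exp (real n)"
    and gap: "kap * T * (1 - T) * Iinf n \<le> f (T * Iinf n) - T * f (Iinf n)"
  shows "kap * T * (1 - T) * Iinf n - (s0 * tau + lam * (real k + 1) * exp 1) * (C * exp (real n))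
           \<le> rhs (\<lambda>j. max 0 (T * Iinf j - C * exp (real j))) n"
proof -
  define E where "E j = C * exp (real j)" for j :: nat
  define W where "W j = T * Iinf j - E j" for j
  have E: "E j > 0" for j unfolding E_def using C by simp
  have E_succ: "E (j + 1) = exp 1 * E j" for j unfolding E_def by (simp add: algebra_simps flip: exp_add)
  have Wn: "0 < W n" "W n \<le> T * Iinf n" unfolding W_def using pos E[of n] by (simp_all add: E_def)
  have "f (T * Iinf n) - f (W n) \<le> s0 * tau * E n"
    using sir_f_diff_le_nonneg[OF Wn(2) less_imp_le[OF Wn(1)]] unfolding W_def by simp
  hence lower: "kap * T * (1 - T) * Iinf n - (s0 * tau + lam * (real k + 1) * exp 1) * E n
      \<le> f (W n) - T * f (Iinf n) - lam * (real k + 1) * exp 1 * E n"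
    using gap by (simp add: algebra_simps)
  have rhs_eq: "rhs (\<lambda>j. max 0 (W j)) n = rhs (\<lambda>j. max 0 (T * Iinf j - C * exp (real j))) n"
    unfolding W_def E_def ..
  have "f (W n) - T * f (Iinf n) - lam * (real k + 1) * exp 1 * E n \<le> rhs (\<lambda>j. max 0 (W j)) n"
  proof (cases "n = 1")
    case True
    define a where "a = lam * (real k + 1)"
    have a: "a > 0" unfolding a_def using lam_pos by (simp add: add_pos_nonneg)
    have "a * (E 2 - E 1) \<le> a * (exp 1 * E 1)"
      using E_succ[of 1] E[of 1] a by (intro mult_left_mono) (auto simp: numeral_2_eq_2)
    moreover have "a * (W 2 - W 1) \<le> a * (max 0 (W 2) - W 1)" using a by (intro mult_left_mono) auto
    moreover have "a * (W 2 - W 1) = T * (a * (Iinf 2 - Iinf 1)) - a * (E 2 - E 1)"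
      unfolding W_def by (simp add: algebra_simps)
    moreover have "a * (Iinf 2 - Iinf 1) = - f (Iinf 1) - i0"
      using rhs_Iinf[of 1] unfolding rhs_def a_def by simp
    hence "T * (a * (Iinf 2 - Iinf 1)) = - (T * f (Iinf 1)) - T * i0"
      by (simp add: right_diff_distrib)
    moreover have "T * i0 \<le> i0" using T i0_pos by (simp add: mult_left_le_one_le)
    moreover have "rhs (\<lambda>j. max 0 (W j)) n = f (W 1) + i0 + a * (max 0 (W 2) - W 1)"
      using True Wn(1) unfolding rhs_def a_def by simp
    ultimately show ?thesis using True unfolding a_def by (simp add: algebra_simps)
  next
    case False
    define L where "L x = x (n - 1) - (real k + 1) * x n + real k * x (n + 1)" for x :: "nat \<Rightarrow> real"
    have "E (n - 1) \<le> E n" unfolding E_def using C by simp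
    moreover have "0 \<le> E n * real k" "0 \<le> E n * exp 1" using E[of n] by simp_all
    ultimately have "L E \<le> (real k + 1) * exp 1 * E n"
      unfolding L_def using E_succ[of n] by (simp add: algebra_simps)
    hence "lam * L E \<le> lam * ((real k + 1) * exp 1 * E n)" using lam_pos by (intro mult_left_mono) auto
    moreover have "L W \<le> L (\<lambda>j. max 0 (W j))"
    proof -
      have "real k * W (n + 1) \<le> real k * max 0 (W (n + 1))" by (intro mult_left_mono) auto
      thus ?thesis unfolding L_def using Wn(1) by simp
    qed
    hence "lam * L W \<le> lam * L (\<lambda>j. max 0 (W j))" using lam_pos by (intro mult_left_mono) auto
    moreover have "lam * L W = T * (lam * L Iinf) - lam * L E"
      unfolding W_def L_def by (simp add: algebra_simps)
    moreover have "lam * L Iinf = - f (Iinf n)"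
      using rhs_Iinf[OF n] False unfolding rhs_def L_def by simp
    moreover have "rhs (\<lambda>j. max 0 (W j)) n = f (W n) + lam * L (\<lambda>j. max 0 (W j))"
      using False Wn(1) unfolding rhs_def L_def by simp
    ultimately show ?thesis by (simp add: algebra_simps)
  qed
  thus ?thesis using lower rhs_eq unfolding E_def by linarith
qed

lemma Iinf_concavity_gap:
  assumes m: "m > 0" "m \<le> Iinf n" and M: "Iinf n \<le> M" and T: "0 \<le> T" "T \<le> 1"
  shows "s0 * (1 - exp (- tau * m / 2))\<^sup>2 / M * T * (1 - T) * Iinf n \<le> f (T * Iinf n) - T * f (Iinf n)"
proof -
  have M0: "M > 0" using m M by simp
  have "exp (- tau * Iinf n / 2) \<le> exp (- tau * m / 2)" using m tau_pos by simp
  moreover have "exp (- tau * m / 2) \<le> 1" using m tau_pos by simp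
  ultimately have "(1 - exp (- tau * m / 2))\<^sup>2 \<le> (1 - exp (- tau * Iinf n / 2))\<^sup>2"
    by (intro power_mono) auto
  hence "s0 * (1 - exp (- tau * m / 2))\<^sup>2 * (T * (1 - T))
      \<le> s0 * (1 - exp (- tau * Iinf n / 2))\<^sup>2 * (T * (1 - T))"
    using s0_pos T by (intro mult_right_mono mult_left_mono) auto
  also have "\<dots> \<le> f (T * Iinf n) - T * f (Iinf n)"
    using sir_f_concavity_gap[of "Iinf n" T] m T by simp
  moreover have "s0 * (1 - exp (- tau * m / 2))\<^sup>2 / M * T * (1 - T) * Iinf n
      \<le> s0 * (1 - exp (- tau * m / 2))\<^sup>2 * (T * (1 - T))"
  proof -
    have "s0 * (1 - exp (- tau * m / 2))\<^sup>2 / M * T * (1 - T) * Iinf n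
        = s0 * (1 - exp (- tau * m / 2))\<^sup>2 * (T * (1 - T)) * (Iinf n / M)"
      using M0 by (simp add: field_simps)
    also have "\<dots> \<le> s0 * (1 - exp (- tau * m / 2))\<^sup>2 * (T * (1 - T)) * 1"
      using M M0 s0_pos T by (intro mult_left_mono) auto
    finally show ?thesis by simp
  qed
  ultimately show ?thesis by linarith
qed

text \<open>\<open>\<theta>(u) I\<^sup>\<infinity>\<^sub>n\<close> with a logistic \<open>\<theta>\<close> is a subsolution up to a correction growing like
  \<open>e\<^sup>\<mu>\<^sup>u\<^sup>+\<^sup>n\<close>; the correction starts above \<open>m\<close> beyond site \<open>R\<close>, so only \<open>I \<ge> m\<close> on
  the sites up to \<open>R\<close> is needed initially.\<close>

definition relaxation_profile :: "real \<Rightarrow> real \<Rightarrow> real \<Rightarrow> real \<Rightarrow> nat \<Rightarrow> real \<Rightarrow> real" where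
  "relaxation_profile th0 kap m R n u = logistic th0 kap u * Iinf n
     - m * exp ((s0 * tau + lam * (real k + 1) * exp 1) * u + real n - R)"

lemma relaxation_profile_has_derivative:
  assumes "0 < th0" "th0 \<le> 1"
  shows "(relaxation_profile th0 kap m R n has_real_derivative
           kap * logistic th0 kap u * (1 - logistic th0 kap u) * Iinf n
           - (s0 * tau + lam * (real k + 1) * exp 1)
             * (m * exp ((s0 * tau + lam * (real k + 1) * exp 1) * u + real n - R))) (at u)"
  unfolding relaxation_profile_def
  by (auto intro!: derivative_eq_intros logistic_has_derivative[OF assms] simp: algebra_simps)

lemma relaxation_profile_right_dini:
  assumes m: "m > 0" "\<And>n. n \<ge> 1 \<Longrightarrow> m \<le> Iinf n" and M: "\<And>n. n \<ge> 1 \<Longrightarrow> Iinf n \<le> M"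
    and n: "n \<ge> 1" and pos: "relaxation_profile (m / M) (s0 * (1 - exp (- tau * m / 2))\<^sup>2 / M) m R n u > 0"
  shows "right_dini_le (\<lambda>u. max 0 (relaxation_profile (m / M) (s0 * (1 - exp (- tau * m / 2))\<^sup>2 / M) m R n u)) u
           (rhs (\<lambda>j. max 0 (relaxation_profile (m / M) (s0 * (1 - exp (- tau * m / 2))\<^sup>2 / M) m R j u)) n)"
proof -
  have "m \<le> M" using m(2)[of 1] M[of 1] by simp
  hence th0: "0 < m / M" "m / M \<le> 1" using m(1) by simp_all
  define kap where "kap = s0 * (1 - exp (- tau * m / 2))\<^sup>2 / M"
  define th where "th = logistic (m / M) kap u"
  have th: "0 < th" "th \<le> 1" unfolding th_def using logistic_bounds[OF th0] by auto
  define C where "C = m * exp ((s0 * tau + lam * (real k + 1) * exp 1) * u - R)"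
  have C: "C > 0" unfolding C_def using m by simp
  have profile: "relaxation_profile (m / M) kap m R j u = th * Iinf j - C * exp (real j)" for j
    unfolding relaxation_profile_def th_def C_def by (simp add: algebra_simps flip: exp_add)
  have "continuous_on UNIV (relaxation_profile (m / M) kap m R n)"
    using DERIV_continuous_on[OF has_field_derivative_at_within[OF relaxation_profile_has_derivative[OF th0]]]
    by blast
  hence "(relaxation_profile (m / M) kap m R n \<longlongrightarrow> relaxation_profile (m / M) kap m R n u) (at_right u)"
    by (simp add: continuous_on_def filterlim_at_split)
  moreover have "kap * th * (1 - th) * Iinf n
      - (s0 * tau + lam * (real k + 1) * exp 1) * (m * exp ((s0 * tau + lam * (real k + 1) * exp 1) * u + real n - R))
      \<le> rhs (\<lambda>j. max 0 (relaxation_profile (m / M) kap m R j u)) n"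
    using logistic_profile_subsolution[OF th C n pos[folded kap_def, unfolded profile]
        Iinf_concavity_gap[OF m(1) m(2)[OF n] M[OF n] less_imp_le[OF th(1)] th(2)]]
    unfolding profile kap_def[symmetric] C_def by (simp add: algebra_simps flip: exp_add)
  ultimately show ?thesis
    using pos right_dini_le_max[OF right_dini_le_const[of 0] has_real_derivative_right_dini_le
        [OF has_field_derivative_at_within[OF relaxation_profile_has_derivative[OF th0]]] tendsto_const]
    unfolding kap_def[symmetric] th_def by simp
qed

lemma relaxation_profile_initially_le:
  assumes m: "m > 0" "m \<le> M" and M: "Iinf n \<le> M" and low: "real n \<le> R \<Longrightarrow> m \<le> x" and x: "0 \<le> x"
  shows "max 0 (relaxation_profile (m / M) kap m R n 0) \<le> x"
proof -
  have "logistic (m / M) kap 0 * Iinf n = m / M * Iinf n"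
    using logistic_bounds(3)[of "m / M"] m by simp
  also have "\<dots> \<le> m / M * M" using M m by (intro mult_left_mono) auto
  also have "\<dots> = m" using m by simp
  finally have W: "relaxation_profile (m / M) kap m R n 0 \<le> m - m * exp (real n - R)"
    unfolding relaxation_profile_def by simp
  show ?thesis
  proof (cases "real n \<le> R")
    case True
    moreover have "0 < m * exp (real n - R)" using m by simp
    ultimately show ?thesis using W low x by simp
  next
    case False
    hence "m < m * exp (real n - R)" using m by simp
    thus ?thesis using W x by simp
  qed
qed

lemma I_ge_relaxation_profile:
  assumes m: "m > 0" "\<And>n. n \<ge> 1 \<Longrightarrow> m \<le> Iinf n" and M: "\<And>n. n \<ge> 1 \<Longrightarrow> Iinf n \<le> M"
    and s: "s \<ge> 0" and u: "u \<ge> 0"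
    and low: "\<And>n. n \<ge> 1 \<Longrightarrow> real n \<le> R \<Longrightarrow> m \<le> I n s" and n: "n \<ge> 1"
  shows "relaxation_profile (m / M) (s0 * (1 - exp (- tau * m / 2))\<^sup>2 / M) m R n u \<le> I n (s + u)"
proof -
  have "m \<le> M" using m(2)[of 1] M[of 1] by simp
  hence th0: "0 < m / M" "m / M \<le> 1" using m(1) by simp_all
  define W where "W n t = relaxation_profile (m / M) (s0 * (1 - exp (- tau * m / 2))\<^sup>2 / M) m R n (t - s)"
    for n t
  have profile_cont:
    "continuous_on UNIV (relaxation_profile (m / M) (s0 * (1 - exp (- tau * m / 2))\<^sup>2 / M) m R n)" for n
    using DERIV_continuous_on[OF has_field_derivative_at_within[OF relaxation_profile_has_derivative[OF th0]]]
    by blast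
  have W_le: "W n t \<le> M" if "n \<ge> 1" for n t
  proof -
    have "W n t \<le> logistic (m / M) (s0 * (1 - exp (- tau * m / 2))\<^sup>2 / M) (t - s) * Iinf n"
      unfolding W_def relaxation_profile_def using m(1) by simp
    also have "\<dots> \<le> 1 * M"
      using logistic_bounds(1,2)[OF th0] M[OF that] m(2)[OF that] m(1) by (intro mult_mono) auto
    finally show ?thesis by simp
  qed
  have "max 0 (W n (s + u)) \<le> I n (s + u)"
  proof (rule sub_super_comparison[where a=s and b="s + u" and n=n and t="s + u" and B=M
        and Kf="s0 * tau" and u="\<lambda>n t. max 0 (W n t)" and v=I])
    show "continuous_on {s..s + u} (\<lambda>t. max 0 (W n t))" for n
      unfolding W_def
      by (intro continuous_intros continuous_on_compose2[OF profile_cont, of _ "\<lambda>t. t - s"]) auto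
    show "max 0 (W n t) - I n t \<le> M" if "n \<ge> 1" "t \<in> {s..s + u}" for n t
      using W_le[OF that(1), of t] I_nonneg[of n t] that s m(1) \<open>m \<le> M\<close> by (auto simp: max_def)
    show "max 0 (W n s) \<le> I n s" if "n \<ge> 1" for n
      using relaxation_profile_initially_le[OF m(1) \<open>m \<le> M\<close> M[OF that] low[OF that] I_nonneg[OF that s]]
      unfolding W_def by simp
    show "f (max 0 (W n t)) - f (I n t) \<le> s0 * tau * (max 0 (W n t) - I n t)"
      if "n \<ge> 1" "s \<le> t" "I n t < max 0 (W n t)" for n t
    proof -
      have "0 \<le> I n t" using I_nonneg[OF that(1)] that(2) s by simp
      thus ?thesis using sir_f_diff_le_nonneg[of "I n t" "max 0 (W n t)"] that(3) by simp
    qed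
    show "right_dini_le (\<lambda>t. max 0 (W n t)) t (rhs (\<lambda>j. max 0 (W j t)) n)"
      if n1: "n \<ge> 1" and t: "s \<le> t" and less: "I n t < max 0 (W n t)" for n t
    proof -
      have "0 \<le> I n t" using I_nonneg[OF n1] t s by simp
      hence "W n t > 0" using less by (simp add: max_def split: if_splits)
      hence "right_dini_le (\<lambda>u. max 0 (relaxation_profile (m / M) (s0 * (1 - exp (- tau * m / 2))\<^sup>2 / M) m R n u))
          (t - s) (rhs (\<lambda>j. max 0 (W j t)) n)"
        unfolding W_def using relaxation_profile_right_dini[OF m M n1, where R=R and u="t - s"] by simp
      thus ?thesis unfolding W_def by (rule right_dini_le_shift)
    qed
    show "continuous_on {s..s + u} (I n)" if "n \<ge> 1" for n using continuous_on_I that s by simp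
    show "right_dini_le (\<lambda>s. - I n s) t (- rhs (\<lambda>j. I j t) n)" if "n \<ge> 1" "s \<le> t" for n t
      using right_dini_le_neg_I that s by simp
  qed (use n u in auto)
  thus ?thesis unfolding W_def by simp
qed

lemma I_converges_behind_front:
  assumes c: "0 < c" "c < cstar k s0 tau eta lam" and \<epsilon>: "\<epsilon> > 0"
  shows "\<forall>\<^sub>F t in at_top. \<forall>n. 1 \<le> n \<and> real n \<le> c * t \<longrightarrow> \<bar>I n t - Iinf n\<bar> \<le> \<epsilon>"
proof -
  define c1 where "c1 = (c + cstar k s0 tau eta lam) / 2"
  have c1: "0 < c1" "c1 < cstar k s0 tau eta lam" "c < c1" unfolding c1_def using c by auto
  obtain m1 T0 where m1: "m1 > 0" "\<And>t n. t \<ge> T0 \<Longrightarrow> n \<ge> 1 \<Longrightarrow> real n \<le> c1 * t \<Longrightarrow> m1 \<le> I n t"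
    using I_bounded_below_behind_front[OF c1(1,2)] by blast
  obtain m2 where m2: "m2 > 0" "\<And>n. n \<ge> 1 \<Longrightarrow> m2 \<le> Iinf n"
    using Iinf_bounded_below by blast
  define m where "m = min m1 m2"
  have m: "m > 0" "\<And>n. n \<ge> 1 \<Longrightarrow> m \<le> Iinf n" unfolding m_def using m1 m2 by force+
  obtain M where "\<forall>n\<ge>1. \<bar>Iinf n\<bar> \<le> M" using Iinf_bdd by blast
  hence M: "\<And>n. n \<ge> 1 \<Longrightarrow> Iinf n \<le> M" by (meson abs_le_D1)
  have mM: "m \<le> M" using m(2)[of 1] M[of 1] by simp
  hence M0: "M > 0" using m(1) by simp
  define th0 where "th0 = m / M"
  have th0: "0 < th0" "th0 \<le> 1" unfolding th0_def using m(1) M0 mM by auto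
  define kap where "kap = s0 * (1 - exp (- tau * m / 2))\<^sup>2 / M"
  have "exp (- tau * m / 2) < 1" using tau_pos m by simp
  hence "(1 - exp (- tau * m / 2))\<^sup>2 > 0" using tau_pos m(1) by simp
  hence kap: "kap > 0" unfolding kap_def using s0_pos M0 by simp
  define \<mu> where "\<mu> = s0 * tau + lam * (real k + 1) * exp 1"
  obtain t0 where t0: "t0 \<ge> 0" "1 - logistic th0 kap t0 \<le> \<epsilon> / (2 * M)"
    using logistic_close_to_1[OF th0 kap, of "\<epsilon> / (2 * M)"] \<epsilon> M0 by auto
  have logistic_close: "(1 - logistic th0 kap t0) * Iinf n \<le> \<epsilon> / 2" if "n \<ge> 1" for n
  proof -
    have "(1 - logistic th0 kap t0) * Iinf n \<le> \<epsilon> / (2 * M) * M"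
      using t0(2) logistic_bounds(2)[OF th0, of kap t0] M[OF that] m(1) m(2)[OF that]
      by (intro mult_mono) auto
    thus ?thesis using M0 by simp
  qed
  define D where "D = max 0 (\<mu> * t0 + ln (2 * m / \<epsilon>))"
  have "\<bar>I n t - Iinf n\<bar> \<le> \<epsilon>"
    if t: "t \<ge> max (max T0 0 + t0) ((c1 * t0 + D) / (c1 - c))" and n: "1 \<le> n" "real n \<le> c * t"
    for t n
  proof -
    define s where "s = t - t0"
    have s: "s \<ge> T0" "s \<ge> 0" "s + t0 = t" unfolding s_def using t t0(1) by auto
    have "logistic th0 kap t0 * Iinf n - m * exp (\<mu> * t0 + real n - c1 * s) \<le> I n t"
      using I_ge_relaxation_profile[OF m _ s(2) t0(1) _ n(1), of M "c1 * s"] M m1(2)[OF s(1)] s(3)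
      unfolding relaxation_profile_def th0_def kap_def \<mu>_def m_def by force
    moreover have "m * exp (\<mu> * t0 + real n - c1 * s) \<le> \<epsilon> / 2"
    proof -
      have "c1 * t0 + D \<le> (c1 - c) * t" using t c1 by (simp add: pos_divide_le_eq mult.commute)
      hence "\<mu> * t0 + real n - c1 * s \<le> ln (\<epsilon> / (2 * m))"
        using n(2) m(1) \<epsilon> unfolding s_def D_def by (simp add: ln_div algebra_simps)
      hence "exp (\<mu> * t0 + real n - c1 * s) \<le> \<epsilon> / (2 * m)"
        using m(1) \<epsilon> by (simp add: ln_ge_iff)
      thus ?thesis using m(1) by (simp add: field_simps)
    qed
    moreover have "I n t \<le> Iinf n" using I_le_Iinf[OF n(1), of t] s(2,3) t0(1) by simp
    ultimately show ?thesis using logistic_close[OF n(1)] by (simp add: algebra_simps)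
  qed
  thus ?thesis unfolding eventually_at_top_linorder by blast
qed

end

theorem theorem8:
  fixes k :: nat and s0 i0 tau eta lam :: real
    and Iinf :: "nat \<Rightarrow> real" and I :: "nat \<Rightarrow> real \<Rightarrow> real"
  assumes k2: "k \<ge> 2"
    and s0: "0 < s0" "s0 < 1"
    and i0: "0 < i0" "i0 < 1"
    and pos: "tau > 0" "eta > 0" "lam > 0"
    and R0_gt: "R0 s0 tau eta > 1"
    and lam_lt: "lam < lambda_c k s0 tau eta"
    \<comment> \<open>I^inf: a positive bounded solution of the stationary problem\<close>
    and Iinf_pos: "\<And>n. n \<ge> 1 \<Longrightarrow> Iinf n > 0"
    and Iinf_bdd: "\<exists>B. \<forall>n\<ge>1. \<bar>Iinf n\<bar> \<le> B"
    and Iinf_eq: "\<And>n. n \<ge> 2 \<Longrightarrow>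
        0 = sir_f s0 tau eta (Iinf n)
            + lam * (Iinf (n - 1) - (real k + 1) * Iinf n + real k * Iinf (n + 1))"
    and Iinf_eq1: "0 = sir_f s0 tau eta (Iinf 1) + i0
            + lam * (real k + 1) * (- Iinf 1 + Iinf 2)"
    \<comment> \<open>I(t): a solution of the lattice ODE system, bounded on bounded time intervals\<close>
    and I_bdd: "\<And>T. \<exists>B. \<forall>n\<ge>1. \<forall>t\<in>{0..T}. \<bar>I n t\<bar> \<le> B"
    and I_ode: "\<And>n t. n \<ge> 2 \<Longrightarrow> t \<ge> 0 \<Longrightarrow>
        ((I n) has_real_derivative
          (sir_f s0 tau eta (I n t)
           + lam * (I (n - 1) t - (real k + 1) * I n t + real k * I (n + 1) t)))
        (at t within {0..})"
    and I_ode1: "\<And>t. t \<ge> 0 \<Longrightarrow>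
        ((I 1) has_real_derivative
          (sir_f s0 tau eta (I 1 t) + i0 + lam * (real k + 1) * (- I 1 t + I 2 t)))
        (at t within {0..})"
    and I_init: "\<And>n. n \<ge> 1 \<Longrightarrow> I n 0 = 0"
  shows "cstar k s0 tau eta lam > 0
    \<and> (\<forall>c. 0 < c \<and> c < cstar k s0 tau eta lam \<longrightarrow>
          (\<forall>\<epsilon>>0. \<forall>\<^sub>F t in at_top.
             \<forall>n. 1 \<le> n \<and> real n \<le> c * t \<longrightarrow> \<bar>I n t - Iinf n\<bar> \<le> \<epsilon>))
    \<and> (\<forall>c. c > cstar k s0 tau eta lam \<longrightarrow>
          (\<forall>\<epsilon>>0. \<forall>\<^sub>F t in at_top.
             \<forall>n. n \<ge> 1 \<and> real n \<ge> c * t \<longrightarrow> \<bar>I n t\<bar> \<le> \<epsilon>))"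
proof -
  have "1 < sqrt (real k)" using k2 by simp
  hence "0 < (sqrt (real k) - 1)\<^sup>2" by simp
  hence den: "0 < real k + 1 - 2 * sqrt (real k)" by (simp add: power2_diff)
  have "eta * (R0 s0 tau eta - 1) = s0 * tau - eta" unfolding R0_def using pos(2) by (simp add: field_simps)
  hence "lam * (real k + 1 - 2 * sqrt (real k)) < s0 * tau - eta"
    using lam_lt den unfolding lambda_c_def by (simp add: pos_less_divide_eq)
  then interpret sir_solution k s0 tau eta lam i0 I Iinf
    using k2 s0 i0 pos Iinf_pos Iinf_bdd Iinf_eq Iinf_eq1 I_bdd I_ode I_ode1 I_init
    by unfold_locales auto
  show ?thesis using cstar_pos I_converges_behind_front I_vanishes_ahead by blast
qed

end
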